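(* Let $G$ be a finitely generated torsion-free group and $l:G\to\mathbb{Z}^n$ a proper, $\delta$-regular, $\delta$-hyperbolic length function with $ht(\delta)=1$ and such that $G_1=\{g\in G\mid ht(l(g))\le1\}$ is a finitely generated isolated subgroup of $G$. Then $G_1$ is a torsion-free word hyperbolic group, and $G_1$ (with a word metric for a finite generating set) is quasi-isometric to $(G_1,d_l)$, where $d_l(g,h)$ is the first coordinate of $l(g^{-1}h)$.
   Context: $\mathbb{Z}^n$ carries the right lexicographic order ($a<b$ iff $a_j<b_j$ for the largest $j$ with $a_j\ne b_j$); $ht(a)$ is the largest index with $a_k\ne0$, $ht(0)=0$. Length function: $l(1)=0$, $l(g)\ge0$, $l(g^{-1})=l(g)$, $l(gh)\le l(g)+l(h)$; $c(g,h)=\tfrac12(l(g)+l(h)-l(g^{-1}h))$; $\delta$-hyperbolic: $c(f,g)\ge\min\{c(f,h),c(g,h)\}-\delta$ for all $f,g,h$; $\delta$-regular: for all $g,h$ exist $g_c,h_c,g_d,h_d$ with $l(g_c)=l(h_c)=c(g,h)$, $g=g_cg_d$, $h=h_ch_d$, $l(g)=l(g_c)+l(g_d)$, $l(h)=l(h_c)+l(h_d)$, $l(g_c^{-1}h_c)\le4\delta$. Proper: $\{g\mid l(g)\le(k,0,\dots,0)\}$ is finite for all $k\in\mathbb{N}$. Isolated subgroup $H$: $g^m\in H$ for a nonzero integer $m$ implies $g\in H$. *)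

theory Defs
  imports "HOL-Algebra.Group" "HOL-Algebra.Generated_Groups" Complex_Main
begin

(* Elements of Z^n are represented as functions v :: nat => int with v i = 0
   outside {1..n}; coordinate i is v i (1-based). *)
definition zn_vec :: "nat \<Rightarrow> (nat \<Rightarrow> 'b::zero) \<Rightarrow> bool" where
  "zn_vec n v \<longleftrightarrow> (\<forall>i. (i < 1 \<or> n < i) \<longrightarrow> v i = 0)"

definition lex_less :: "(nat \<Rightarrow> 'b::linorder) \<Rightarrow> (nat \<Rightarrow> 'b) \<Rightarrow> bool" where
  "lex_less a b \<longleftrightarrow> (\<exists>j. a j < b j \<and> (\<forall>k>j. a k = b k))"

definition lex_le :: "(nat \<Rightarrow> 'b::linorder) \<Rightarrow> (nat \<Rightarrow> 'b) \<Rightarrow> bool" where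
  "lex_le a b \<longleftrightarrow> a = b \<or> lex_less a b"

definition lex_min :: "(nat \<Rightarrow> 'b::linorder) \<Rightarrow> (nat \<Rightarrow> 'b) \<Rightarrow> (nat \<Rightarrow> 'b)" where
  "lex_min a b = (if lex_le a b then a else b)"

definition ht :: "(nat \<Rightarrow> int) \<Rightarrow> nat" where
  "ht a = (if \<exists>k. a k \<noteq> 0 then Max {k. a k \<noteq> 0} else 0)"

definition length_function ::
  "('a, 'c) monoid_scheme \<Rightarrow> nat \<Rightarrow> ('a \<Rightarrow> nat \<Rightarrow> int) \<Rightarrow> bool" where
  "length_function G n l \<longleftrightarrow>
     (\<forall>g\<in>carrier G. zn_vec n (l g)) \<and>
     l \<one>\<^bsub>G\<^esub> = (\<lambda>i. 0) \<and>
     (\<forall>g\<in>carrier G. lex_le (\<lambda>i. 0) (l g)) \<and>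
     (\<forall>g\<in>carrier G. l (inv\<^bsub>G\<^esub> g) = l g) \<and>
     (\<forall>g\<in>carrier G. \<forall>h\<in>carrier G. lex_le (l (g \<otimes>\<^bsub>G\<^esub> h)) (\<lambda>i. l g i + l h i))"

definition gprod ::
  "('a, 'c) monoid_scheme \<Rightarrow> ('a \<Rightarrow> nat \<Rightarrow> int) \<Rightarrow> 'a \<Rightarrow> 'a \<Rightarrow> nat \<Rightarrow> rat" where
  "gprod G l g h = (\<lambda>i. (of_int (l g i) + of_int (l h i)
                          - of_int (l (inv\<^bsub>G\<^esub> g \<otimes>\<^bsub>G\<^esub> h) i)) / 2)"

definition hyperbolic_lf ::
  "('a, 'c) monoid_scheme \<Rightarrow> ('a \<Rightarrow> nat \<Rightarrow> int) \<Rightarrow> (nat \<Rightarrow> int) \<Rightarrow> bool" where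
  "hyperbolic_lf G l \<delta> \<longleftrightarrow>
     (\<forall>f\<in>carrier G. \<forall>g\<in>carrier G. \<forall>h\<in>carrier G.
        lex_le (\<lambda>i. lex_min (gprod G l f h) (gprod G l g h) i - of_int (\<delta> i))
               (gprod G l f g))"

definition regular_lf ::
  "('a, 'c) monoid_scheme \<Rightarrow> ('a \<Rightarrow> nat \<Rightarrow> int) \<Rightarrow> (nat \<Rightarrow> int) \<Rightarrow> bool" where
  "regular_lf G l \<delta> \<longleftrightarrow>
     (\<forall>g\<in>carrier G. \<forall>h\<in>carrier G.
        \<exists>gc\<in>carrier G. \<exists>hc\<in>carrier G. \<exists>gd\<in>carrier G. \<exists>hd\<in>carrier G.
          (\<lambda>i. of_int (l gc i)) = gprod G l g h \<and>
          (\<lambda>i. of_int (l hc i)) = gprod G l g h \<and>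
          g = gc \<otimes>\<^bsub>G\<^esub> gd \<and> h = hc \<otimes>\<^bsub>G\<^esub> hd \<and>
          l g = (\<lambda>i. l gc i + l gd i) \<and> l h = (\<lambda>i. l hc i + l hd i) \<and>
          lex_le (l (inv\<^bsub>G\<^esub> gc \<otimes>\<^bsub>G\<^esub> hc)) (\<lambda>i. 4 * \<delta> i))"

definition proper_lf :: "('a, 'c) monoid_scheme \<Rightarrow> ('a \<Rightarrow> nat \<Rightarrow> int) \<Rightarrow> bool" where
  "proper_lf G l \<longleftrightarrow>
     (\<forall>k::nat. finite {g\<in>carrier G. lex_le (l g) (\<lambda>i. if i = 1 then int k else 0)})"

definition torsion_free :: "('a, 'c) monoid_scheme \<Rightarrow> bool" where
  "torsion_free G \<longleftrightarrow>
     (\<forall>g\<in>carrier G. \<forall>m::nat. m > 0 \<longrightarrow> g [^]\<^bsub>G\<^esub> m = \<one>\<^bsub>G\<^esub> \<longrightarrow> g = \<one>\<^bsub>G\<^esub>)"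

definition finitely_generated :: "('a, 'c) monoid_scheme \<Rightarrow> bool" where
  "finitely_generated G \<longleftrightarrow>
     (\<exists>S. finite S \<and> S \<subseteq> carrier G \<and> generate G S = carrier G)"

definition isolated_subgroup :: "'a set \<Rightarrow> ('a, 'c) monoid_scheme \<Rightarrow> bool" where
  "isolated_subgroup H G \<longleftrightarrow> subgroup H G \<and>
     (\<forall>g\<in>carrier G. \<forall>m::int. m \<noteq> 0 \<longrightarrow> g [^]\<^bsub>G\<^esub> m \<in> H \<longrightarrow> g \<in> H)"

definition word_length :: "('a, 'c) monoid_scheme \<Rightarrow> 'a set \<Rightarrow> 'a \<Rightarrow> nat" where
  "word_length G S g = (LEAST k. \<exists>xs. length xs = k \<and>
       set xs \<subseteq> S \<union> (\<lambda>s. inv\<^bsub>G\<^esub> s) ` S \<and>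
       foldr (\<lambda>x y. x \<otimes>\<^bsub>G\<^esub> y) xs \<one>\<^bsub>G\<^esub> = g)"

definition word_dist :: "('a, 'c) monoid_scheme \<Rightarrow> 'a set \<Rightarrow> 'a \<Rightarrow> 'a \<Rightarrow> real" where
  "word_dist G S g h = real (word_length G S (inv\<^bsub>G\<^esub> g \<otimes>\<^bsub>G\<^esub> h))"

definition gromov_hyperbolic :: "'a set \<Rightarrow> ('a \<Rightarrow> 'a \<Rightarrow> real) \<Rightarrow> bool" where
  "gromov_hyperbolic X d \<longleftrightarrow> (\<exists>\<delta>::real. \<forall>x\<in>X. \<forall>y\<in>X. \<forall>z\<in>X. \<forall>w\<in>X.
     (d w x + d w y - d x y) / 2 \<ge>
       min ((d w x + d w z - d x z) / 2) ((d w y + d w z - d y z) / 2) - \<delta>)"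

definition word_hyperbolic :: "('a, 'c) monoid_scheme \<Rightarrow> bool" where
  "word_hyperbolic G \<longleftrightarrow> group G \<and>
     (\<exists>S. finite S \<and> S \<subseteq> carrier G \<and> generate G S = carrier G \<and>
          gromov_hyperbolic (carrier G) (word_dist G S))"

definition quasi_isometric ::
  "'a set \<Rightarrow> ('a \<Rightarrow> 'a \<Rightarrow> real) \<Rightarrow> 'b set \<Rightarrow> ('b \<Rightarrow> 'b \<Rightarrow> real) \<Rightarrow> bool" where
  "quasi_isometric X d Y e \<longleftrightarrow> (\<exists>f K C. f ` X \<subseteq> Y \<and> K \<ge> 1 \<and> C \<ge> 0 \<and>
     (\<forall>x\<in>X. \<forall>x'\<in>X. d x x' / K - C \<le> e (f x) (f x') \<and> e (f x) (f x') \<le> K * d x x' + C) \<and>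
     (\<forall>y\<in>Y. \<exists>x\<in>X. e y (f x) \<le> C))"

end

theory Submission
  imports Defs
begin

text \<open>On \<open>G\<^sub>1\<close> the first coordinate of \<open>l\<close> gives a pseudometric \<open>d\<^sub>l\<close> satisfying the
  four-point condition with constant \<open>\<delta>\<^sub>1\<close>. Regularity lets one split off from any \<open>g\<close> a prefix
  of length at most the longest generator without losing length, so \<open>d\<^sub>l\<close> has coarse geodesics
  with bounded steps; properness bounds the word length of elements of bounded \<open>d\<^sub>l\<close>-length. Hence
  the identity is a quasi-isometry between the word metric and \<open>d\<^sub>l\<close>.

  Hyperbolicity is then transferred to the word metric by a Morse-type argument: the distance \<open>D\<close>
  of a point of a \<open>d\<^sub>l\<close>-coarse geodesic farthest from a word geodesic with the same ends satisfies
  \<open>D \<le> O(log D)\<close>, so word geodesics and coarse geodesics stay uniformly close. Consequently word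
  geodesic triangles are uniformly thin, and thin triangles imply the four-point condition.\<close>

section \<open>Gromov products and discrete geodesics\<close>

definition gromov_product :: "('a \<Rightarrow> 'a \<Rightarrow> real) \<Rightarrow> 'a \<Rightarrow> 'a \<Rightarrow> 'a \<Rightarrow> real" where
  "gromov_product d e x y = (d e x + d e y - d x y) / 2"

lemma gromov_product_altdef: "gromov_product d e x y = d e x / 2 + d e y / 2 - d x y / 2"
  by (simp add: gromov_product_def diff_divide_distrib add_divide_distrib)

lemma gromov_product_commute: "d x y = d y x \<Longrightarrow> gromov_product d e x y = gromov_product d e y x"
  unfolding gromov_product_def by simp

lemma gromov_product_self: "d x x = 0 \<Longrightarrow> gromov_product d e x x = d e x"
  unfolding gromov_product_def by simp

lemma bounded_if_logarithmic_self_bound: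
  fixes a b c e :: real
  assumes a: "a \<ge> 0" and b: "b \<ge> 0" and e: "e \<ge> 0"
  shows "\<exists>B. \<forall>D\<ge>0. (\<forall>N::nat. a*D + b \<le> 2^N \<longrightarrow> D \<le> c + e*N) \<longrightarrow> D \<le> B"
proof -
  define lam where "lam = ln (2::real)"
  have l0: "lam > 0" unfolding lam_def by simp
  define T where "T = 2*e*a/lam + 1"
  have T0: "T \<ge> 1" unfolding T_def using a e l0 by simp
  have Tl: "T*lam = 2*e*a + lam" unfolding T_def using l0 by (simp add: field_simps)
  define K where "K = c + e*(log 2 T + 1) + e*(b+1)/(T*lam)"
  show ?thesis
  proof (intro exI allI impI)
    fix D :: real assume D0: "D \<ge> 0" and H: "\<forall>N::nat. a*D+b \<le> 2^N \<longrightarrow> D \<le> c + e*N"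
    define y where "y = a*D+b+1"
    have y1: "y \<ge> 1" unfolding y_def using a b D0 by simp
    define N where "N = nat \<lceil>log 2 y\<rceil>"
    have NN: "real N \<ge> log 2 y" "real N \<le> log 2 y + 1" unfolding N_def using y1
      by (simp_all add: of_nat_ceiling)
    have "y = 2 powr (log 2 y)" using y1 by simp
    also have "\<dots> \<le> 2 powr (real N)" using NN(1) by (intro powr_mono) auto
    also have "\<dots> = 2^N" by (simp add: powr_realpow)
    finally have DN: "D \<le> c + e*N" using H unfolding y_def by simp
    \<comment> \<open>\<open>log 2 y \<le> log 2 T + y/(T ln 2)\<close> by concavity of the logarithm, and \<open>T\<close> is chosen so
       large that the resulting linear term in \<open>D\<close> has slope at most \<open>1/2\<close>.\<close>
    have "ln (y/T) \<le> y/T - 1" using y1 T0 by (intro ln_le_minus_one) simp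
    hence "ln y \<le> ln T + y/T" using y1 T0 by (simp add: ln_div)
    hence "ln y / lam \<le> (ln T + y/T) / lam" using l0 by (intro divide_right_mono) auto
    hence "log 2 y \<le> log 2 T + y/(T*lam)" unfolding log_def lam_def
      by (simp add: add_divide_distrib)
    hence "real N \<le> log 2 T + 1 + y/(T*lam)" using NN by linarith
    hence "e*N \<le> e*(log 2 T + 1) + e*(y/(T*lam))" using e
      by (metis distrib_left mult_left_mono)
    moreover have "e*(y/(T*lam)) = e*a*D/(T*lam) + e*(b+1)/(T*lam)" unfolding y_def
      by (simp add: add_divide_distrib[symmetric] algebra_simps)
    moreover have "e*a*D/(T*lam) \<le> D/2"
    proof -
      have Tp: "T*lam > 0" using T0 l0 by simp
      have "e*a*D*2 \<le> D*(T*lam)" unfolding Tl using D0 l0 by (simp add: algebra_simps)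
      thus ?thesis using Tp by (simp add: divide_simps)
    qed
    ultimately have "D \<le> K + D/2" using DN unfolding K_def by linarith
    thus "D \<le> 2*K" by linarith
  qed
qed

lemma nat_crossing:
  fixes f :: "nat \<Rightarrow> nat"
  assumes "f 0 \<le> i" "i < f N"
  shows "\<exists>t<N. f t \<le> i \<and> i < f (Suc t)"
  using assms
proof (induction N)
  case (Suc N)
  show ?case
  proof (cases "i < f N")
    case True
    then show ?thesis using Suc by (metis less_SucI)
  next
    case False
    then show ?thesis using Suc.prems by auto
  qed
qed simp

definition coarse_geodesic ::
  "'a set \<Rightarrow> ('a \<Rightarrow> 'a \<Rightarrow> real) \<Rightarrow> real \<Rightarrow> 'a \<Rightarrow> 'a \<Rightarrow> (nat \<Rightarrow> 'a) \<Rightarrow> nat \<Rightarrow> bool" where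
  "coarse_geodesic X d L x y z N \<longleftrightarrow> z 0 = x \<and> z N = y \<and> (\<forall>t\<le>N. z t \<in> X) \<and>
     (\<forall>s t u. s \<le> t \<longrightarrow> t \<le> u \<longrightarrow> u \<le> N \<longrightarrow> d (z s) (z u) = d (z s) (z t) + d (z t) (z u)) \<and>
     (\<forall>t<N. d (z t) (z (Suc t)) \<le> L)"

definition discrete_geodesic ::
  "'a set \<Rightarrow> ('a \<Rightarrow> 'a \<Rightarrow> real) \<Rightarrow> 'a \<Rightarrow> 'a \<Rightarrow> (nat \<Rightarrow> 'a) \<Rightarrow> nat \<Rightarrow> bool" where
  "discrete_geodesic X w x y p m \<longleftrightarrow> p 0 = x \<and> p m = y \<and> (\<forall>i\<le>m. p i \<in> X) \<and>
     (\<forall>i\<le>m. \<forall>j\<le>m. w (p i) (p j) = \<bar>real i - real j\<bar>)"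

lemma coarse_geodesicD:
  assumes "coarse_geodesic X d L x y z N"
  shows "z 0 = x" "z N = y" "\<And>t. t \<le> N \<Longrightarrow> z t \<in> X"
    "\<And>s t u. s \<le> t \<Longrightarrow> t \<le> u \<Longrightarrow> u \<le> N \<Longrightarrow> d (z s) (z u) = d (z s) (z t) + d (z t) (z u)"
    "\<And>t. t < N \<Longrightarrow> d (z t) (z (Suc t)) \<le> L"
  using assms unfolding coarse_geodesic_def by blast+

lemma discrete_geodesicD:
  assumes "discrete_geodesic X w x y p m"
  shows "p 0 = x" "p m = y" "\<And>i. i \<le> m \<Longrightarrow> p i \<in> X"
    "\<And>i j. i \<le> m \<Longrightarrow> j \<le> m \<Longrightarrow> w (p i) (p j) = \<bar>real i - real j\<bar>"
  using assms unfolding discrete_geodesic_def by blast+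

lemma coarse_geodesic_endpoints:
  "coarse_geodesic X d L x y z N \<Longrightarrow> x \<in> X \<and> y \<in> X"
  using coarse_geodesicD(1-3)[of X d L x y z N] by (metis le0 order_refl)

lemma discrete_geodesic_endpoints:
  "discrete_geodesic X w x y p m \<Longrightarrow> x \<in> X \<and> y \<in> X"
  using discrete_geodesicD(1-3)[of X w x y p m] by (metis le0 order_refl)

lemma coarse_geodesic_suffix:
  assumes z: "coarse_geodesic X d L x y z N" and a: "a \<le> N"
  shows "coarse_geodesic X d L (z a) y (\<lambda>t. z (a + t)) (N - a)"
  unfolding coarse_geodesic_def
proof (intro conjI allI impI)
  fix s t u assume "s \<le> t" "t \<le> u" "u \<le> N - a"
  then show "d (z (a+s)) (z (a+u)) = d (z (a+s)) (z (a+t)) + d (z (a+t)) (z (a+u))"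
    using a by (intro coarse_geodesicD(4)[OF z]) auto
qed (use coarse_geodesicD[OF z] a in auto)

lemma coarse_geodesic_Cons:
  assumes z: "coarse_geodesic X d L x y z N" and x': "x' \<in> X" and refl: "d x' x' = 0"
    and triangle: "\<And>u v w. u \<in> X \<Longrightarrow> v \<in> X \<Longrightarrow> w \<in> X \<Longrightarrow> d u w \<le> d u v + d v w"
    and aligned: "d x' y = d x' x + d x y" and step: "d x' x \<le> L"
  shows "coarse_geodesic X d L x' y (\<lambda>t. if t = 0 then x' else z (t - 1)) (Suc N)"
proof -
  note z0 = coarse_geodesicD(1)[OF z] and zN = coarse_geodesicD(2)[OF z]
    and zX = coarse_geodesicD(3)[OF z] and additive = coarse_geodesicD(4)[OF z]
  have through: "d x' (z t) = d x' x + d x (z t)" if t: "t \<le> N" for t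
  proof -
    have "d x y = d x (z t) + d (z t) y" using additive[of 0 t N] z0 zN t by simp
    moreover have "d x' y \<le> d x' (z t) + d (z t) y" using triangle x' zX[of t] zX[of N] zN t by simp
    moreover have "d x' (z t) \<le> d x' x + d x (z t)" using triangle x' zX[of 0] zX[of t] z0 t by simp
    ultimately show ?thesis using aligned by linarith
  qed
  show ?thesis unfolding coarse_geodesic_def
  proof (intro conjI allI impI)
    fix s t u :: nat assume stu: "s \<le> t" "t \<le> u" "u \<le> Suc N"
    consider "s = 0" "t = 0" | "s = 0" "t \<noteq> 0" | "s \<noteq> 0" by blast
    then show "d (if s = 0 then x' else z (s - 1)) (if u = 0 then x' else z (u - 1))
      = d (if s = 0 then x' else z (s - 1)) (if t = 0 then x' else z (t - 1))
      + d (if t = 0 then x' else z (t - 1)) (if u = 0 then x' else z (u - 1))"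
    proof cases
      case 1
      then show ?thesis using refl by simp
    next
      case 2
      have "d x (z (u - 1)) = d x (z (t - 1)) + d (z (t - 1)) (z (u - 1))"
        using additive[of 0 "t - 1" "u - 1"] z0 stu by simp
      then show ?thesis using 2 stu through[of "t - 1"] through[of "u - 1"] by simp
    next
      case 3
      then show ?thesis using additive[of "s - 1" "t - 1" "u - 1"] stu by simp
    qed
  next
    fix t assume "t < Suc N"
    then show "d (if t = 0 then x' else z (t - 1)) (if Suc t = 0 then x' else z (Suc t - 1)) \<le> L"
      using step z0 coarse_geodesicD(5)[OF z, of "t - 1"] by (cases t) auto
  qed (use x' zX zN in auto)
qed

lemma gromov_hyperbolic_cong:
  "gromov_hyperbolic X d \<Longrightarrow> (\<And>x y. x \<in> X \<Longrightarrow> y \<in> X \<Longrightarrow> d' x y = d x y) \<Longrightarrow> gromov_hyperbolic X d'"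
  unfolding gromov_hyperbolic_def by simp

lemma quasi_isometric_cong:
  "quasi_isometric X d Y e \<Longrightarrow> (\<And>x y. x \<in> X \<Longrightarrow> y \<in> X \<Longrightarrow> d' x y = d x y) \<Longrightarrow> quasi_isometric X d' Y e"
  unfolding quasi_isometric_def by simp

section \<open>Transfer of hyperbolicity to a coarsely equivalent geodesic metric\<close>

locale discrete_geodesic_space =
  fixes X :: "'a set" and w :: "'a \<Rightarrow> 'a \<Rightarrow> real"
  assumes w_refl: "x \<in> X \<Longrightarrow> w x x = 0"
    and w_sym: "x \<in> X \<Longrightarrow> y \<in> X \<Longrightarrow> w x y = w y x"
    and w_triangle: "x \<in> X \<Longrightarrow> y \<in> X \<Longrightarrow> z \<in> X \<Longrightarrow> w x z \<le> w x y + w y z"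
    and w_geodesic: "x \<in> X \<Longrightarrow> y \<in> X \<Longrightarrow> \<exists>p m. discrete_geodesic X w x y p m"
begin

abbreviation geodesic where "geodesic \<equiv> discrete_geodesic X w"

definition thin_triangles :: "real \<Rightarrow> bool" where
  "thin_triangles C \<longleftrightarrow> (\<forall>x y z p m u mu v mv. geodesic x z p m \<longrightarrow> geodesic x y u mu \<longrightarrow> geodesic y z v mv \<longrightarrow>
     (\<forall>i\<le>m. (\<exists>j\<le>mu. w (p i) (u j) \<le> C) \<or> (\<exists>j\<le>mv. w (p i) (v j) \<le> C)))"

lemma geodesic_dist_split:
  assumes p: "geodesic x y p m" and j: "j \<le> m"
  shows "w x y = w x (p j) + w (p j) y"
  using discrete_geodesicD(4)[OF p, of 0 m] discrete_geodesicD(4)[OF p, of 0 j]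
    discrete_geodesicD(4)[OF p, of j m] discrete_geodesicD(1,2)[OF p] j by simp

lemma gromov_product_le_dist_geodesic:
  assumes u: "geodesic x y u m" and j: "j \<le> m" and e: "e \<in> X"
  shows "gromov_product w e x y \<le> w e (u j)"
proof -
  have xy: "x \<in> X" "y \<in> X" using discrete_geodesic_endpoints[OF u] by auto
  have uj: "u j \<in> X" using discrete_geodesicD(3)[OF u] j by simp
  have "w e x \<le> w e (u j) + w (u j) x" "w e y \<le> w e (u j) + w (u j) y"
    using w_triangle e xy uj by auto
  moreover have "w x y = w x (u j) + w (u j) y" using geodesic_dist_split[OF u j] .
  moreover have "w (u j) x = w x (u j)" using w_sym uj xy by auto
  ultimately show ?thesis unfolding gromov_product_altdef by linarith
qed

text \<open>The last point of \<open>p\<close> that is \<open>C\<close>-close to \<open>\<alpha>\<close> is, by thinness, \<open>(C+1)\<close>-close to \<open>\<beta>\<close>.\<close>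

lemma tripod_point:
  assumes thin: "thin_triangles C" and C: "C \<ge> 0"
    and p: "geodesic a b p m" and \<alpha>: "geodesic a e \<alpha> ma" and \<beta>: "geodesic e b \<beta> mb"
  shows "\<exists>i\<le>m. \<exists>j1\<le>ma. \<exists>j2\<le>mb. w (p i) (\<alpha> j1) \<le> C + 1 \<and> w (p i) (\<beta> j2) \<le> C + 1"
proof -
  have ab: "a \<in> X" "b \<in> X" using discrete_geodesic_endpoints[OF p] by auto
  define S where "S = {i. i \<le> m \<and> (\<exists>j\<le>ma. w (p i) (\<alpha> j) \<le> C)}"
  have fin: "finite S" unfolding S_def by simp
  have "0 \<in> S"
    unfolding S_def using discrete_geodesicD(1)[OF p] discrete_geodesicD(1)[OF \<alpha>] w_refl ab C by auto
  then have ne: "S \<noteq> {}" by auto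
  define i where "i = Max S"
  have "i \<in> S" unfolding i_def using fin ne by (rule Max_in)
  then obtain j1 where j1: "j1 \<le> ma" "w (p i) (\<alpha> j1) \<le> C" and im: "i \<le> m" unfolding S_def by auto
  show ?thesis
  proof (cases "i = m")
    case True
    have "w (p i) (\<beta> mb) = 0"
      using True discrete_geodesicD(2)[OF p] discrete_geodesicD(2)[OF \<beta>] w_refl ab by simp
    then show ?thesis using j1 im C by (intro exI[of _ i] conjI exI[of _ j1] exI[of _ mb]) auto
  next
    case False
    then have next_le: "Suc i \<le> m" using im by simp
    have "Suc i \<notin> S" using Max_ge[OF fin, of "Suc i"] unfolding i_def by auto
    then have "\<not> (\<exists>j\<le>ma. w (p (Suc i)) (\<alpha> j) \<le> C)" using next_le unfolding S_def by auto
    then obtain j2 where j2: "j2 \<le> mb" "w (p (Suc i)) (\<beta> j2) \<le> C"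
      using thin p \<alpha> \<beta> next_le unfolding thin_triangles_def by blast
    have "w (p i) (\<beta> j2) \<le> w (p i) (p (Suc i)) + w (p (Suc i)) (\<beta> j2)"
      using w_triangle discrete_geodesicD(3)[OF p] discrete_geodesicD(3)[OF \<beta>] next_le j2 im by simp
    moreover have "w (p i) (p (Suc i)) = 1" using discrete_geodesicD(4)[OF p, of i "Suc i"] next_le by simp
    ultimately have "w (p i) (\<beta> j2) \<le> C + 1" using j2 by linarith
    then show ?thesis using j1 im j2 by (intro exI[of _ i] conjI exI[of _ j1] exI[of _ j2]) auto
  qed
qed

lemma gromov_product_ge_near_geodesics:
  assumes \<alpha>: "geodesic a e \<alpha> ma" and \<beta>: "geodesic e b \<beta> mb" and j: "j1 \<le> ma" "j2 \<le> mb"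
    and q: "q \<in> X" and near: "w q (\<alpha> j1) \<le> K" "w q (\<beta> j2) \<le> K"
  shows "w e q - 2*K \<le> gromov_product w e a b"
proof -
  have X: "a \<in> X" "e \<in> X" "b \<in> X" "\<alpha> j1 \<in> X" "\<beta> j2 \<in> X"
    using discrete_geodesic_endpoints[OF \<alpha>] discrete_geodesic_endpoints[OF \<beta>]
      discrete_geodesicD(3)[OF \<alpha>] discrete_geodesicD(3)[OF \<beta>] j by auto
  have "w a e = w a (\<alpha> j1) + w (\<alpha> j1) e" "w e b = w e (\<beta> j2) + w (\<beta> j2) b"
    using geodesic_dist_split[OF \<alpha> j(1)] geodesic_dist_split[OF \<beta> j(2)] by auto
  moreover have "w a b \<le> w a (\<alpha> j1) + w (\<alpha> j1) q + w q (\<beta> j2) + w (\<beta> j2) b"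
    using w_triangle[of a "\<alpha> j1" b] w_triangle[of "\<alpha> j1" q b] w_triangle[of q "\<beta> j2" b] X q by auto
  moreover have "w e q \<le> w e (\<alpha> j1) + w (\<alpha> j1) q" "w e q \<le> w e (\<beta> j2) + w (\<beta> j2) q"
    using w_triangle X q by auto
  moreover have "w (\<alpha> j1) q = w q (\<alpha> j1)" "w (\<beta> j2) q = w q (\<beta> j2)" "w e a = w a e" "w (\<alpha> j1) e = w e (\<alpha> j1)"
    using w_sym X q by auto
  ultimately show ?thesis using near unfolding gromov_product_altdef by linarith
qed

theorem thin_triangles_imp_gromov_hyperbolic:
  assumes thin: "thin_triangles C" and C: "C \<ge> 0"
  shows "gromov_hyperbolic X w"
proof -
  have "min (gromov_product w e a c) (gromov_product w e b c) - (3*C + 2) \<le> gromov_product w e a b"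
    if X: "a \<in> X" "b \<in> X" "c \<in> X" "e \<in> X" for a b c e
  proof -
    obtain p m where p: "geodesic a b p m" using w_geodesic X by blast
    obtain \<alpha> ma where \<alpha>: "geodesic a e \<alpha> ma" using w_geodesic X by blast
    obtain \<beta> mb where \<beta>: "geodesic e b \<beta> mb" using w_geodesic X by blast
    obtain u mu where u: "geodesic a c u mu" using w_geodesic X by blast
    obtain v mv where v: "geodesic c b v mv" using w_geodesic X by blast
    obtain i j1 j2 where i: "i \<le> m" and j: "j1 \<le> ma" "j2 \<le> mb"
      and near: "w (p i) (\<alpha> j1) \<le> C + 1" "w (p i) (\<beta> j2) \<le> C + 1"
      using tripod_point[OF thin C p \<alpha> \<beta>] by blast
    have pi: "p i \<in> X" using discrete_geodesicD(3)[OF p] i by simp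
    have lower: "w e (p i) - 2*(C + 1) \<le> gromov_product w e a b"
      using gromov_product_ge_near_geodesics[OF \<alpha> \<beta> j pi near] .
    have "(\<exists>j\<le>mu. w (p i) (u j) \<le> C) \<or> (\<exists>j\<le>mv. w (p i) (v j) \<le> C)"
      using thin p u v i unfolding thin_triangles_def by blast
    then have "min (gromov_product w e a c) (gromov_product w e b c) \<le> w e (p i) + C"
    proof
      assume "\<exists>j\<le>mu. w (p i) (u j) \<le> C"
      then obtain j where j: "j \<le> mu" "w (p i) (u j) \<le> C" by blast
      have "gromov_product w e a c \<le> w e (u j)" using gromov_product_le_dist_geodesic[OF u j(1) X(4)] .
      moreover have "w e (u j) \<le> w e (p i) + w (p i) (u j)"
        using w_triangle X pi discrete_geodesicD(3)[OF u] j by simp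
      ultimately show ?thesis using j by linarith
    next
      assume "\<exists>j\<le>mv. w (p i) (v j) \<le> C"
      then obtain j where j: "j \<le> mv" "w (p i) (v j) \<le> C" by blast
      have "gromov_product w e c b \<le> w e (v j)" using gromov_product_le_dist_geodesic[OF v j(1) X(4)] .
      moreover have "gromov_product w e b c = gromov_product w e c b"
        using gromov_product_commute w_sym X by metis
      moreover have "w e (v j) \<le> w e (p i) + w (p i) (v j)"
        using w_triangle X pi discrete_geodesicD(3)[OF v] j by simp
      ultimately show ?thesis using j by linarith
    qed
    then show ?thesis using lower by argo
  qed
  then show ?thesis unfolding gromov_hyperbolic_def gromov_product_def by blast
qed

end

locale hyperbolic_transfer = discrete_geodesic_space X w
  for X :: "'a set" and w :: "'a \<Rightarrow> 'a \<Rightarrow> real" +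
  fixes d :: "'a \<Rightarrow> 'a \<Rightarrow> real" and \<delta> L M :: real
  assumes d_refl: "x \<in> X \<Longrightarrow> d x x = 0"
    and d_sym: "x \<in> X \<Longrightarrow> y \<in> X \<Longrightarrow> d x y = d y x"
    and d_triangle: "x \<in> X \<Longrightarrow> y \<in> X \<Longrightarrow> z \<in> X \<Longrightarrow> d x z \<le> d x y + d y z"
    and d_hyperbolic: "e \<in> X \<Longrightarrow> x \<in> X \<Longrightarrow> y \<in> X \<Longrightarrow> z \<in> X \<Longrightarrow>
      min (gromov_product d e x z) (gromov_product d e z y) - \<delta> \<le> gromov_product d e x y"
    and delta_nonneg: "\<delta> \<ge> 0" and L_nonneg: "L \<ge> 0" and M_nonneg: "M \<ge> 0"
    and d_coarse_geodesic: "x \<in> X \<Longrightarrow> y \<in> X \<Longrightarrow> \<exists>z N. coarse_geodesic X d L x y z N"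
    and d_le_w: "x \<in> X \<Longrightarrow> y \<in> X \<Longrightarrow> d x y \<le> L * w x y"
    and w_le_d: "x \<in> X \<Longrightarrow> y \<in> X \<Longrightarrow> w x y \<le> M * d x y + M"
begin

abbreviation cgeodesic where "cgeodesic \<equiv> coarse_geodesic X d L"

lemma d_nonneg: "x \<in> X \<Longrightarrow> y \<in> X \<Longrightarrow> 0 \<le> d x y"
  using d_triangle[of x y x] d_refl[of x] d_sym[of x y] by simp

lemma gromov_product_le_basepoint:
  assumes "q \<in> X" "q' \<in> X" "x \<in> X" "y \<in> X"
  shows "gromov_product d q x y \<le> gromov_product d q' x y + d q q'"
  using d_triangle[of q q' x] d_triangle[of q q' y] assms unfolding gromov_product_altdef by linarith

lemma coarse_geodesic_prefix_reverse:
  assumes z: "cgeodesic x y z N" and a: "a \<le> N"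
  shows "cgeodesic (z a) x (\<lambda>t. z (a - t)) a"
  unfolding coarse_geodesic_def
proof (intro conjI allI impI)
  fix s t u assume stu: "s \<le> t" "t \<le> u" "u \<le> a"
  have X: "z (a-s) \<in> X" "z (a-t) \<in> X" "z (a-u) \<in> X" using coarse_geodesicD(3)[OF z] a by auto
  have "d (z (a-u)) (z (a-s)) = d (z (a-u)) (z (a-t)) + d (z (a-t)) (z (a-s))"
    using stu a by (intro coarse_geodesicD(4)[OF z]) auto
  then show "d (z (a-s)) (z (a-u)) = d (z (a-s)) (z (a-t)) + d (z (a-t)) (z (a-u))"
    using d_sym[of "z (a-u)" "z (a-s)"] d_sym[of "z (a-u)" "z (a-t)"] d_sym[of "z (a-t)" "z (a-s)"] X
    by linarith
next
  fix t assume t: "t < a"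
  then have "Suc (a - Suc t) = a - t" by simp
  then have "d (z (a - Suc t)) (z (a - t)) \<le> L" using coarse_geodesicD(5)[OF z, of "a - Suc t"] t a by simp
  then show "d (z (a - t)) (z (a - Suc t)) \<le> L"
    using d_sym[of "z (a - t)" "z (a - Suc t)"] coarse_geodesicD(3)[OF z] t a by simp
qed (use coarse_geodesicD[OF z] a in auto)

lemma coarse_geodesic_gromov_product_zero:
  assumes z: "cgeodesic x y z N" and stu: "s \<le> t" "t \<le> u" "u \<le> N"
  shows "gromov_product d (z t) (z s) (z u) = 0"
  using coarse_geodesicD(4)[OF z stu] d_sym[of "z t" "z s"] coarse_geodesicD(3)[OF z] stu
  unfolding gromov_product_def by simp

lemma coarse_geodesic_exit:
  assumes z: "cgeodesic x y z N" and r: "r \<ge> 0"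
  shows "\<exists>t\<le>N. d x (z t) \<le> r + L \<and> (t = N \<or> r \<le> d x (z t))"
proof (cases "\<exists>t\<le>N. r \<le> d x (z t)")
  case False
  then have "d x (z N) < r" by auto
  then show ?thesis using L_nonneg by (intro exI[of _ N]) auto
next
  case True
  define t where "t = (LEAST t. t \<le> N \<and> r \<le> d x (z t))"
  have t: "t \<le> N \<and> r \<le> d x (z t)" unfolding t_def by (rule LeastI_ex) (use True in blast)
  have "d x (z t) \<le> r + L"
  proof (cases t)
    case 0
    then show ?thesis using coarse_geodesicD(1)[OF z] d_refl coarse_geodesic_endpoints[OF z] r L_nonneg
      by simp
  next
    case (Suc s)
    have "s < t" using Suc by simp
    then have "\<not> (s \<le> N \<and> r \<le> d x (z s))"
      using not_less_Least[of s "\<lambda>t. t \<le> N \<and> r \<le> d x (z t)"] unfolding t_def by blast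
    then have "d x (z s) < r" using t Suc by simp
    moreover have "d x (z t) = d x (z s) + d (z s) (z t)"
      using coarse_geodesicD(4)[OF z, of 0 s t] coarse_geodesicD(1)[OF z] t Suc by simp
    moreover have "d (z s) (z t) \<le> L" using coarse_geodesicD(5)[OF z, of s] t Suc by simp
    ultimately show ?thesis by linarith
  qed
  then show ?thesis using t by blast
qed

lemma coarse_geodesic_exits_around:
  assumes z: "cgeodesic x y z N" and t0: "t0 \<le> N" and r: "r \<ge> 0"
  obtains t1 t2 where "t1 \<le> t0" "t0 \<le> t2" "t2 \<le> N"
    "d (z t0) (z t1) \<le> r + L" "z t1 \<in> {x, y} \<or> r \<le> d (z t0) (z t1)"
    "d (z t0) (z t2) \<le> r + L" "z t2 \<in> {x, y} \<or> r \<le> d (z t0) (z t2)"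
proof -
  obtain s where s: "s \<le> t0" "d (z t0) (z (t0 - s)) \<le> r + L" "s = t0 \<or> r \<le> d (z t0) (z (t0 - s))"
    using coarse_geodesic_exit[OF coarse_geodesic_prefix_reverse[OF z t0] r] by auto
  obtain s' where s': "s' \<le> N - t0" "d (z t0) (z (t0 + s')) \<le> r + L"
    "s' = N - t0 \<or> r \<le> d (z t0) (z (t0 + s'))"
    using coarse_geodesic_exit[OF coarse_geodesic_suffix[OF z t0] r] by auto
  have "z (t0 - s) \<in> {x, y} \<or> r \<le> d (z t0) (z (t0 - s))"
    using s(3) coarse_geodesicD(1)[OF z] by auto
  moreover have "z (t0 + s') \<in> {x, y} \<or> r \<le> d (z t0) (z (t0 + s'))"
    using s'(3) coarse_geodesicD(2)[OF z] t0 by auto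
  ultimately show thesis using that[of "t0 - s" "t0 + s'"] s(2) s'(1,2) t0 by simp
qed

lemma gromov_product_chain:
  assumes c: "\<And>i. a \<le> i \<Longrightarrow> i \<le> b \<Longrightarrow> c i \<in> X" and q: "q \<in> X" and ab: "a < b" "b - a \<le> 2^N"
    and step: "\<And>i. a \<le> i \<Longrightarrow> i < b \<Longrightarrow> \<mu> \<le> gromov_product d q (c i) (c (Suc i))"
  shows "\<mu> - \<delta> * N \<le> gromov_product d q (c a) (c b)"
  using c ab step
proof (induction N arbitrary: a b)
  case 0
  then have "b = Suc a" by simp
  with 0 show ?case by auto
next
  case (Suc N)
  show ?case
  proof (cases "b - a \<le> 2^N")
    case True
    then have "\<mu> - \<delta> * N \<le> gromov_product d q (c a) (c b)" using Suc.IH[of a b] Suc.prems by blast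
    moreover have "\<delta> * N \<le> \<delta> * Suc N" using delta_nonneg by (simp add: mult_left_mono)
    ultimately show ?thesis by linarith
  next
    case False
    define h where "h = a + 2^N"
    have h: "a < h" "h < b" "h - a \<le> 2^N" "b - h \<le> 2^N"
      using False Suc.prems(3,4) unfolding h_def by auto
    have "\<mu> - \<delta> * N \<le> gromov_product d q (c a) (c h)" using Suc.IH[of a h] Suc.prems h by auto
    moreover have "\<mu> - \<delta> * N \<le> gromov_product d q (c h) (c b)" using Suc.IH[of h b] Suc.prems h by auto
    moreover have "min (gromov_product d q (c a) (c h)) (gromov_product d q (c h) (c b)) - \<delta>
        \<le> gromov_product d q (c a) (c b)"
      using d_hyperbolic[OF q, of "c a" "c b" "c h"] Suc.prems(1) h by simp
    ultimately show ?thesis by (simp add: distrib_left)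
  qed
qed

lemma gromov_product_along_far_geodesic:
  assumes p: "geodesic x y p m" and q: "q \<in> X" and far: "\<And>i. i \<le> m \<Longrightarrow> D \<le> d q (p i)"
    and ij: "i \<le> m" "j \<le> m" "\<bar>real i - real j\<bar> \<le> 2^N"
  shows "D - L/2 - \<delta>*N \<le> gromov_product d q (p i) (p j)"
proof -
  note pX = discrete_geodesicD(3)[OF p]
  have step: "D - L/2 \<le> gromov_product d q (p k) (p (Suc k))" if "k < b" "b \<le> m" for k b
  proof -
    have "d (p k) (p (Suc k)) \<le> L * w (p k) (p (Suc k))" using d_le_w pX that by simp
    also have "w (p k) (p (Suc k)) = 1" using discrete_geodesicD(4)[OF p, of k "Suc k"] that by simp
    finally show ?thesis using far[of k] far[of "Suc k"] that unfolding gromov_product_def by simp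
  qed
  have chain: "D - L/2 - \<delta>*N \<le> gromov_product d q (p a) (p b)"
    if ab: "a < b" "b \<le> m" "real b - real a \<le> 2^N" for a b
  proof (rule gromov_product_chain[where c = p])
    have "real (b - a) \<le> real (2^N)" using ab by simp
    then show "b - a \<le> 2^N" by (simp only: of_nat_le_iff)
  qed (use ab pX q step in auto)
  consider "i < j" | "i = j" | "j < i" by linarith
  then show ?thesis
  proof cases
    case 1
    moreover have "real j - real i \<le> 2^N" using ij(3) by linarith
    ultimately show ?thesis using chain[of i j] ij(2) by blast
  next
    case 2
    have "gromov_product d q (p i) (p i) = d q (p i)" using gromov_product_self[of d "p i" q] d_refl pX ij(1) by simp
    moreover have "0 \<le> \<delta> * N" using delta_nonneg by simp
    ultimately show ?thesis using far[of i] ij(1) L_nonneg 2 by simp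
  next
    case 3
    have "gromov_product d q (p j) (p i) = gromov_product d q (p i) (p j)"
      using gromov_product_commute[of d "p j" "p i" q] d_sym pX ij by simp
    moreover have "real i - real j \<le> 2^N" using ij(3) by linarith
    ultimately show ?thesis using chain[of j i] ij(1) 3 by linarith
  qed
qed


text \<open>Let \<open>z t\<^sub>0\<close> be a point of a coarse geodesic farthest (at distance \<open>D\<close>) from a discrete
  geodesic \<open>p\<close> with the same endpoints. Leaving \<open>z t\<^sub>0\<close> in both directions until distance
  \<open>2D\<close> and projecting to \<open>p\<close> yields a piece of \<open>p\<close> of length \<open>O(D)\<close>, all at distance
  \<open>\<ge> D\<close> from \<open>z t\<^sub>0\<close>; by hyperbolicity its endpoints have Gromov product \<open>D - O(log D)\<close>
  at \<open>z t\<^sub>0\<close>, whereas the corresponding points of \<open>z\<close> have Gromov product \<open>0\<close>.\<close>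

lemma farthest_point_bound:
  assumes z: "cgeodesic x y z N" and p: "geodesic x y p m" and t0: "t0 \<le> N"
    and far: "\<And>i. i \<le> m \<Longrightarrow> D \<le> d (z t0) (p i)"
    and close: "\<And>t. t \<le> N \<Longrightarrow> \<exists>i\<le>m. d (z t) (p i) \<le> D"
    and D: "D \<ge> 0" and N': "6*M*D + (2*M*L + M) \<le> 2^N'"
  shows "D \<le> L/2 + 2*\<delta> + \<delta>*N'"
proof -
  note zX = coarse_geodesicD(3)[OF z] and pX = discrete_geodesicD(3)[OF p]
  define x0 where "x0 = z t0"
  have x0: "x0 \<in> X" unfolding x0_def using zX t0 .
  have anchor: "\<exists>i\<le>m. d (z t) (p i) \<le> D \<and> D \<le> gromov_product d x0 (z t) (p i)"
    if t: "t \<le> N" and end_or_far: "z t \<in> {x, y} \<or> 2*D \<le> d x0 (z t)" for t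
  proof (cases "2*D \<le> d x0 (z t)")
    case True
    obtain i where i: "i \<le> m" "d (z t) (p i) \<le> D" using close t by blast
    then show ?thesis
      using True far[of i] d_sym[of "z t" "p i"] zX pX t unfolding gromov_product_def x0_def by auto
  next
    case False
    then obtain i where i: "i \<le> m" "z t = p i"
      using end_or_far discrete_geodesicD(1,2)[OF p] by (metis insertE le0 order_refl singletonD)
    then show ?thesis
      using far[of i] gromov_product_self[of d "p i" x0] d_refl pX D unfolding x0_def by auto
  qed
  have "2*D \<ge> 0" using D by simp
  then obtain t1 t2 where t: "t1 \<le> t0" "t0 \<le> t2" "t2 \<le> N"
    "d x0 (z t1) \<le> 2*D + L" "z t1 \<in> {x, y} \<or> 2*D \<le> d x0 (z t1)"
    "d x0 (z t2) \<le> 2*D + L" "z t2 \<in> {x, y} \<or> 2*D \<le> d x0 (z t2)"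
    using coarse_geodesic_exits_around[OF z t0] unfolding x0_def by blast
  obtain i1 where i1: "i1 \<le> m" "d (z t1) (p i1) \<le> D" "D \<le> gromov_product d x0 (z t1) (p i1)"
    using anchor[of t1] t t0 by auto
  obtain i2 where i2: "i2 \<le> m" "d (z t2) (p i2) \<le> D" "D \<le> gromov_product d x0 (z t2) (p i2)"
    using anchor[of t2] t by auto
  have X: "z t1 \<in> X" "z t2 \<in> X" "p i1 \<in> X" "p i2 \<in> X" using zX pX t t0 i1 i2 by auto
  have "d (p i1) (p i2) \<le> d (p i1) (z t1) + d (z t1) x0 + d x0 (z t2) + d (z t2) (p i2)"
    using d_triangle[of "p i1" "z t1" "p i2"] d_triangle[of "z t1" x0 "p i2"]
      d_triangle[of x0 "z t2" "p i2"] X x0 by linarith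
  also have "\<dots> \<le> 6*D + 2*L"
    using d_sym[of "p i1" "z t1"] d_sym[of "z t1" x0] t(4,6) i1 i2 X x0 by linarith
  finally have "w (p i1) (p i2) \<le> M*(6*D + 2*L) + M"
    using w_le_d[of "p i1" "p i2"] mult_left_mono[OF _ M_nonneg] X by (smt (verit))
  then have "\<bar>real i1 - real i2\<bar> \<le> 2^N'"
    using discrete_geodesicD(4)[OF p i1(1) i2(1)] N' by (simp add: algebra_simps)
  then have middle: "D - L/2 - \<delta>*N' \<le> gromov_product d x0 (p i1) (p i2)"
    using gromov_product_along_far_geodesic[OF p x0] far i1 i2 unfolding x0_def by blast
  have "gromov_product d x0 (z t1) (z t2) = 0"
    using coarse_geodesic_gromov_product_zero[OF z t(1-3)] unfolding x0_def .
  moreover have "min (gromov_product d x0 (z t1) (p i1)) (gromov_product d x0 (p i1) (z t2)) - \<delta>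
      \<le> gromov_product d x0 (z t1) (z t2)"
    using d_hyperbolic X x0 by blast
  moreover have "min (gromov_product d x0 (p i1) (p i2)) (gromov_product d x0 (p i2) (z t2)) - \<delta>
      \<le> gromov_product d x0 (p i1) (z t2)"
    using d_hyperbolic X x0 by blast
  moreover have "gromov_product d x0 (p i2) (z t2) = gromov_product d x0 (z t2) (p i2)"
    using gromov_product_commute[of d "p i2" "z t2" x0] d_sym X by simp
  moreover have "0 \<le> \<delta> * N'" using delta_nonneg by simp
  ultimately show ?thesis using i1(3) i2(3) middle L_nonneg delta_nonneg by linarith
qed


lemma coarse_geodesic_near_geodesic:
  obtains B where "B \<ge> 0"
    and "\<And>x y z N p m t. cgeodesic x y z N \<Longrightarrow> geodesic x y p m \<Longrightarrow> t \<le> N \<Longrightarrow>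
      \<exists>i\<le>m. d (z t) (p i) \<le> B"
proof -
  obtain B where B: "\<And>D. D \<ge> 0 \<Longrightarrow>
      (\<forall>N'::nat. (6*M)*D + (2*M*L + M) \<le> 2^N' \<longrightarrow> D \<le> (L/2 + 2*\<delta>) + \<delta>*N') \<Longrightarrow> D \<le> B"
    using bounded_if_logarithmic_self_bound[of "6*M" "2*M*L + M" \<delta> "L/2 + 2*\<delta>"]
      M_nonneg L_nonneg delta_nonneg by auto
  have "\<exists>i\<le>m. d (z t) (p i) \<le> max B 0"
    if z: "cgeodesic x y z N" and p: "geodesic x y p m" and t: "t \<le> N" for x y z N p m t
  proof -
    define \<rho> where "\<rho> t = Min ((\<lambda>i. d (z t) (p i)) ` {..m})" for t
    define D where "D = Max (\<rho> ` {..N})"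
    have \<rho>_le: "\<rho> t \<le> d (z t) (p i)" if "i \<le> m" for t i
      unfolding \<rho>_def using that by (intro Min_le) auto
    have \<rho>_attained: "\<exists>i\<le>m. d (z t) (p i) = \<rho> t" for t
    proof -
      have "\<rho> t \<in> (\<lambda>i. d (z t) (p i)) ` {..m}" unfolding \<rho>_def by (intro Min_in) auto
      then show ?thesis by auto
    qed
    have D_ge: "\<rho> t \<le> D" if "t \<le> N" for t unfolding D_def using that by (intro Max_ge) auto
    have "D \<in> \<rho> ` {..N}" unfolding D_def by (intro Max_in) auto
    then obtain t0 where t0: "t0 \<le> N" "D = \<rho> t0" by auto
    have close: "\<exists>i\<le>m. d (z t) (p i) \<le> D" if "t \<le> N" for t
      using \<rho>_attained[of t] D_ge[OF that] by force
    obtain i0 where "i0 \<le> m" "d (z t0) (p i0) = D" using \<rho>_attained[of t0] t0 by auto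
    then have D0: "D \<ge> 0"
      using d_nonneg coarse_geodesicD(3)[OF z t0(1)] discrete_geodesicD(3)[OF p] by metis
    have "D \<le> B"
      using B[OF D0] farthest_point_bound[OF z p t0(1) _ close D0] \<rho>_le t0(2) by auto
    then show ?thesis using close[OF t] by force
  qed
  then show thesis using that[of "max B 0"] by simp
qed

lemma geodesic_between_projections:
  assumes z: "cgeodesic x y z N" and p: "geodesic x' y' p m" and s: "s < N"
    and ij: "j \<le> i" "i \<le> j'" "j' \<le> m"
    and near: "d (z s) (p j) \<le> B" "d (z (Suc s)) (p j') \<le> B"
  shows "d (p i) (z s) \<le> B + L*(M*(2*B + L) + M)"
proof -
  have X: "z s \<in> X" "z (Suc s) \<in> X" "p j \<in> X" "p j' \<in> X" "p i \<in> X"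
    using coarse_geodesicD(3)[OF z] discrete_geodesicD(3)[OF p] s ij by auto
  have "d (p j) (p j') \<le> 2*B + L"
    using d_triangle[of "p j" "z s" "p j'"] d_triangle[of "z s" "z (Suc s)" "p j'"]
      d_sym[of "p j" "z s"] coarse_geodesicD(5)[OF z s] near X by linarith
  then have "w (p j) (p j') \<le> M*(2*B + L) + M"
    using w_le_d[of "p j" "p j'"] mult_left_mono[OF _ M_nonneg] X by (smt (verit))
  moreover have "w (p i) (p j) \<le> w (p j) (p j')"
    using discrete_geodesicD(4)[OF p] ij by simp
  ultimately have "d (p i) (p j) \<le> L*(M*(2*B + L) + M)"
    using d_le_w[of "p i" "p j"] mult_left_mono[OF _ L_nonneg] X by (smt (verit))
  then show ?thesis
    using d_triangle[of "p i" "p j" "z s"] d_sym[of "p j" "z s"] near X by linarith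
qed

lemma geodesic_near_coarse_geodesic:
  obtains B where "B \<ge> 0"
    and "\<And>x y z N p m i. cgeodesic x y z N \<Longrightarrow> geodesic x y p m \<Longrightarrow> i \<le> m \<Longrightarrow>
      \<exists>t\<le>N. d (p i) (z t) \<le> B"
proof -
  obtain B1 where B1: "B1 \<ge> 0" and near: "\<And>x y z N p m t. cgeodesic x y z N \<Longrightarrow> geodesic x y p m \<Longrightarrow>
      t \<le> N \<Longrightarrow> \<exists>i\<le>m. d (z t) (p i) \<le> B1"
    using coarse_geodesic_near_geodesic by blast
  define B where "B = B1 + L*(M*(2*B1 + L) + M)"
  have B: "B \<ge> 0" unfolding B_def using B1 L_nonneg M_nonneg by simp
  have "\<exists>t\<le>N. d (p i) (z t) \<le> B"
    if z: "cgeodesic x y z N" and p: "geodesic x y p m" and i: "i \<le> m" for x y z N p m i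
  proof (cases "i = m")
    case True
    then show ?thesis using coarse_geodesicD(2)[OF z] discrete_geodesicD(2)[OF p] d_refl
        coarse_geodesic_endpoints[OF z] B by (intro exI[of _ N]) auto
  next
    case False
    note zX = coarse_geodesicD(3)[OF z] and pX = discrete_geodesicD(3)[OF p]
    have "N \<noteq> 0"
    proof
      assume "N = 0"
      then have "w x y = 0"
        using coarse_geodesicD(1,2)[OF z] w_refl coarse_geodesic_endpoints[OF z] by auto
      then show False
        using discrete_geodesicD(4)[OF p, of 0 m] discrete_geodesicD(1,2)[OF p] False i by simp
    qed
    define \<phi> where "\<phi> t = (if t = 0 then 0 else if t = N then m else SOME j. j \<le> m \<and> d (z t) (p j) \<le> B1)"
      for t
    have \<phi>: "\<phi> t \<le> m \<and> d (z t) (p (\<phi> t)) \<le> B1" if "t \<le> N" for t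
    proof -
      consider "t = 0" | "t = N" | "t \<noteq> 0" "t \<noteq> N" by blast
      then show ?thesis
      proof cases
        case 1
        then show ?thesis unfolding \<phi>_def
          using coarse_geodesicD(1)[OF z] discrete_geodesicD(1)[OF p] d_refl
            coarse_geodesic_endpoints[OF z] B1 by simp
      next
        case 2
        then show ?thesis unfolding \<phi>_def using \<open>N \<noteq> 0\<close>
          coarse_geodesicD(2)[OF z] discrete_geodesicD(2)[OF p] d_refl coarse_geodesic_endpoints[OF z] B1
          by simp
      next
        case 3
        have "\<exists>j. j \<le> m \<and> d (z t) (p j) \<le> B1" using near[OF z p that] by blast
        from someI_ex[OF this] show ?thesis unfolding \<phi>_def using 3 by simp
      qed
    qed
    obtain s where s: "s < N" "\<phi> s \<le> i" "i < \<phi> (Suc s)"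
      using nat_crossing[of \<phi> i N] \<open>N \<noteq> 0\<close> False i unfolding \<phi>_def by auto
    have "\<phi> s \<le> m" "d (z s) (p (\<phi> s)) \<le> B1" "\<phi> (Suc s) \<le> m" "d (z (Suc s)) (p (\<phi> (Suc s))) \<le> B1"
      using \<phi>[of s] \<phi>[of "Suc s"] s by auto
    then have "d (p i) (z s) \<le> B"
      unfolding B_def using geodesic_between_projections[OF z p s(1,2) less_imp_le[OF s(3)]] by blast
    then show ?thesis using s by (intro exI[of _ s]) auto
  qed
  then show thesis using that B by blast
qed

lemma coarse_geodesic_near_point:
  assumes z: "cgeodesic x y z N" and q: "q \<in> X"
  shows "\<exists>t\<le>N. d q (z t) \<le> 2 * gromov_product d q x y + L + 2*\<delta>"
proof -
  have xy: "x \<in> X" "y \<in> X" using coarse_geodesic_endpoints[OF z] by auto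
  define T where "T = gromov_product d q x y"
  have T: "T \<ge> 0"
    unfolding T_def gromov_product_def using d_triangle[of x q y] d_sym[of x q] q xy by simp
  obtain t where t: "t \<le> N" "d x (z t) \<le> d x q + L" "t = N \<or> d x q \<le> d x (z t)"
    using coarse_geodesic_exit[OF z, of "d x q"] d_nonneg xy q by auto
  have zt: "z t \<in> X" using coarse_geodesicD(3)[OF z t(1)] .
  have sym: "d x q = d q x" "d y q = d q y" "d y (z t) = d (z t) y" using d_sym xy q zt by auto
  show ?thesis
  proof (cases "d x q \<le> d x (z t)")
    case True
    have "d x y = d x (z t) + d (z t) y"
      using coarse_geodesicD(4)[OF z, of 0 t N] coarse_geodesicD(1,2)[OF z] t(1) by simp
    then have "gromov_product d x y (z t) = d x (z t)"
      unfolding gromov_product_def using sym by simp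
    moreover have "gromov_product d x q y = d x q - T"
      unfolding gromov_product_def T_def using sym by (simp add: field_simps)
    moreover have "min (gromov_product d x q y) (gromov_product d x y (z t)) - \<delta> \<le> gromov_product d x q (z t)"
      using d_hyperbolic xy q zt by blast
    ultimately have "d x q - T - \<delta> \<le> gromov_product d x q (z t)" using T True by linarith
    then have "d q (z t) \<le> 2*T + L + 2*\<delta>" using t(2) unfolding gromov_product_altdef by linarith
    then show ?thesis using t(1) unfolding T_def by blast
  next
    case False
    then have "z t = y" "d x y \<le> d x q" using t coarse_geodesicD(2)[OF z] by auto
    then have "d q (z t) \<le> 2*T + L + 2*\<delta>"
      using L_nonneg delta_nonneg sym unfolding T_def gromov_product_altdef by simp
    then show ?thesis using t(1) unfolding T_def by blast
  qed
qed

lemma geodesic_near_point: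
  obtains C where "\<And>a b u mu q. geodesic a b u mu \<Longrightarrow> q \<in> X \<Longrightarrow>
    \<exists>j\<le>mu. w q (u j) \<le> 2*M * gromov_product d q a b + C"
proof -
  obtain B where "B \<ge> 0" and B: "\<And>x y z N p m t. cgeodesic x y z N \<Longrightarrow> geodesic x y p m \<Longrightarrow>
      t \<le> N \<Longrightarrow> \<exists>i\<le>m. d (z t) (p i) \<le> B"
    using coarse_geodesic_near_geodesic by blast
  have "\<exists>j\<le>mu. w q (u j) \<le> 2*M * gromov_product d q a b + (M*(L + 2*\<delta> + B) + M)"
    if u: "geodesic a b u mu" and q: "q \<in> X" for a b u mu q
  proof -
    obtain z N where z: "cgeodesic a b z N"
      using d_coarse_geodesic discrete_geodesic_endpoints[OF u] by blast
    obtain t where t: "t \<le> N" "d q (z t) \<le> 2 * gromov_product d q a b + L + 2*\<delta>"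
      using coarse_geodesic_near_point[OF z q] by blast
    obtain j where j: "j \<le> mu" "d (z t) (u j) \<le> B" using B[OF z u t(1)] by blast
    have X: "z t \<in> X" "u j \<in> X" using coarse_geodesicD(3)[OF z t(1)] discrete_geodesicD(3)[OF u j(1)] .
    have "d q (u j) \<le> 2 * gromov_product d q a b + (L + 2*\<delta> + B)"
      using d_triangle[OF q X] t j by linarith
    then have "M * d q (u j) \<le> M * (2 * gromov_product d q a b + (L + 2*\<delta> + B))"
      using M_nonneg by (rule mult_left_mono)
    then have "w q (u j) \<le> M * (2 * gromov_product d q a b + (L + 2*\<delta> + B)) + M"
      using w_le_d[OF q X(2)] by linarith
    also have "\<dots> = 2*M * gromov_product d q a b + (M*(L + 2*\<delta> + B) + M)"
      by (simp add: algebra_simps)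
    finally show ?thesis using j(1) by blast
  qed
  then show thesis by (rule that)
qed

text \<open>A point of a discrete geodesic is close to a point of the coarse geodesic with the same
  ends, so its Gromov product with these ends is bounded; by hyperbolicity it then has a small
  Gromov product with one of the other two sides.\<close>

lemma thin_triangles_hold: "\<exists>C\<ge>0. thin_triangles C"
proof -
  obtain B where B: "B \<ge> 0" and near: "\<And>x y z N p m i. cgeodesic x y z N \<Longrightarrow> geodesic x y p m \<Longrightarrow>
      i \<le> m \<Longrightarrow> \<exists>t\<le>N. d (p i) (z t) \<le> B"
    using geodesic_near_coarse_geodesic by blast
  obtain C0 where C0: "\<And>a b u mu q. geodesic a b u mu \<Longrightarrow> q \<in> X \<Longrightarrow>
      \<exists>j\<le>mu. w q (u j) \<le> 2*M * gromov_product d q a b + C0"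
    using geodesic_near_point by blast
  define C where "C = 2*M*(B + \<delta>) + max 0 C0"
  have close: "\<exists>j\<le>mu. w q (u j) \<le> C"
    if u: "geodesic a b u mu" and q: "q \<in> X" and small: "gromov_product d q a b \<le> B + \<delta>" for a b u mu q
  proof -
    obtain j where "j \<le> mu" "w q (u j) \<le> 2*M * gromov_product d q a b + C0" using C0[OF u q] by blast
    moreover have "2*M * gromov_product d q a b \<le> 2*M*(B + \<delta>)"
      using small M_nonneg by (simp add: mult_left_mono)
    ultimately show ?thesis unfolding C_def by (intro exI[of _ j]) auto
  qed
  have "thin_triangles C" unfolding thin_triangles_def
  proof (intro allI impI)
    fix x y z p m u mu v mv i
    assume p: "geodesic x z p m" and u: "geodesic x y u mu" and v: "geodesic y z v mv" and i: "i \<le> m"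
    have X: "x \<in> X" "z \<in> X" "y \<in> X" "p i \<in> X"
      using discrete_geodesic_endpoints[OF p] discrete_geodesic_endpoints[OF u]
        discrete_geodesicD(3)[OF p i] by auto
    obtain c N where c: "cgeodesic x z c N" using d_coarse_geodesic X by blast
    obtain t where t: "t \<le> N" "d (p i) (c t) \<le> B" using near[OF c p i] by blast
    have "gromov_product d (c t) x z = 0"
      using coarse_geodesic_gromov_product_zero[OF c, of 0 t N] coarse_geodesicD(1,2)[OF c] t(1) by simp
    then have "gromov_product d (p i) x z \<le> B"
      using gromov_product_le_basepoint[of "p i" "c t" x z] coarse_geodesicD(3)[OF c t(1)] X t(2) by simp
    moreover have "min (gromov_product d (p i) x y) (gromov_product d (p i) y z) - \<delta> \<le> gromov_product d (p i) x z"
      using d_hyperbolic X by blast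
    ultimately have "gromov_product d (p i) x y \<le> B + \<delta> \<or> gromov_product d (p i) y z \<le> B + \<delta>"
      by linarith
    then show "(\<exists>j\<le>mu. w (p i) (u j) \<le> C) \<or> (\<exists>j\<le>mv. w (p i) (v j) \<le> C)"
      using close[OF u X(4)] close[OF v X(4)] by blast
  qed
  moreover have "C \<ge> 0" unfolding C_def using B M_nonneg delta_nonneg by simp
  ultimately show ?thesis by blast
qed

theorem gromov_hyperbolic_w: "gromov_hyperbolic X w"
  using thin_triangles_hold thin_triangles_imp_gromov_hyperbolic by blast

end

section \<open>The subgroup of elements of height at most one\<close>

lemma (in group) torsion_free_subgroup:
  assumes "torsion_free G" and "subgroup H G"
  shows "torsion_free (G\<lparr>carrier := H\<rparr>)"
  unfolding torsion_free_def
proof (intro ballI allI impI)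
  fix g and m :: nat
  assume g: "g \<in> carrier (G\<lparr>carrier := H\<rparr>)" and "m > 0"
    and "g [^]\<^bsub>G\<lparr>carrier := H\<rparr>\<^esub> m = \<one>\<^bsub>G\<lparr>carrier := H\<rparr>\<^esub>"
  then have "g [^] m = \<one>" using nat_pow_consistent[of g m H] by simp
  then show "g = \<one>\<^bsub>G\<lparr>carrier := H\<rparr>\<^esub>"
    using assms g \<open>m > 0\<close> subgroup.subset unfolding torsion_free_def by fastforce
qed

definition coord1_vec :: "(nat \<Rightarrow> 'b::zero) \<Rightarrow> bool" where
  "coord1_vec a \<longleftrightarrow> (\<forall>k. k \<noteq> 1 \<longrightarrow> a k = 0)"

lemma lex_le_coord1_vec_iff:
  fixes a b :: "nat \<Rightarrow> 'b::{linorder,zero}"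
  assumes "coord1_vec a" "coord1_vec b"
  shows "lex_le a b \<longleftrightarrow> a 1 \<le> b 1"
proof
  assume "lex_le a b"
  then consider "a = b" | j where "a j < b j" "\<forall>k>j. a k = b k"
    unfolding lex_le_def lex_less_def by blast
  then show "a 1 \<le> b 1"
  proof cases
    case (2 j)
    then have "j = 1 \<or> j = 0" using assms unfolding coord1_vec_def by (metis less_irrefl)
    then show ?thesis using 2 by auto
  qed simp
next
  assume le: "a 1 \<le> b 1"
  have "\<forall>k>1. a k = b k" using assms unfolding coord1_vec_def by simp
  moreover have "a = b" if "a 1 = b 1"
    using that assms unfolding coord1_vec_def by (metis ext)
  ultimately show "lex_le a b"
    using le unfolding lex_le_def lex_less_def by (metis order.not_eq_order_implies_strict)
qed

lemma lex_min_coord1_vec: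
  fixes a b :: "nat \<Rightarrow> 'b::{linorder,zero}"
  assumes "coord1_vec a" "coord1_vec b"
  shows "lex_min a b 1 = min (a 1) (b 1)" "coord1_vec (lex_min a b)"
  using assms lex_le_coord1_vec_iff[OF assms] unfolding lex_min_def coord1_vec_def by (auto simp: min_def)

lemma ht_le_1_iff_coord1_vec:
  assumes "zn_vec n a"
  shows "ht a \<le> 1 \<longleftrightarrow> coord1_vec a"
proof -
  have "{k. a k \<noteq> 0} \<subseteq> {1..n}"
  proof
    fix k assume "k \<in> {k. a k \<noteq> 0}"
    then have "\<not> (k < 1 \<or> n < k)" using assms unfolding zn_vec_def by blast
    then show "k \<in> {1..n}" by simp
  qed
  then have fin: "finite {k. a k \<noteq> 0}" by (rule finite_subset) simp
  have "ht a \<le> 1 \<longleftrightarrow> (\<forall>k. a k \<noteq> 0 \<longrightarrow> k \<le> 1)"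
  proof (cases "\<exists>k. a k \<noteq> 0")
    case True
    then show ?thesis unfolding ht_def using Max_le_iff[OF fin] by auto
  qed (simp add: ht_def)
  also have "\<dots> \<longleftrightarrow> coord1_vec a"
  proof -
    have "a 0 = 0" using assms unfolding zn_vec_def by simp
    then have "a k \<noteq> 0 \<longrightarrow> k \<le> 1 \<longleftrightarrow> (k \<noteq> 1 \<longrightarrow> a k = 0)" for k
      by (cases k) auto
    then show ?thesis unfolding coord1_vec_def by blast
  qed
  finally show ?thesis .
qed

locale height_one_subgroup =
  fixes G :: "('a, 'c) monoid_scheme" (structure) and n :: nat and l :: "'a \<Rightarrow> nat \<Rightarrow> int"
    and \<delta> :: "nat \<Rightarrow> int" and H :: "'a set"
  assumes group: "group G" and length: "length_function G n l" and hyperbolic: "hyperbolic_lf G l \<delta>"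
    and regular: "regular_lf G l \<delta>" and proper: "proper_lf G l"
    and zn_delta: "zn_vec n \<delta>" and ht_delta: "ht \<delta> = 1"
    and H_def: "H = {g \<in> carrier G. ht (l g) \<le> 1}" and subgroup: "subgroup H G"
begin

sublocale group G by (rule group)

abbreviation "G1 \<equiv> G\<lparr>carrier := H\<rparr>"

lemma H_carrier: "g \<in> H \<Longrightarrow> g \<in> carrier G"
  using H_def by auto

lemma H_one: "\<one> \<in> H" and H_mult: "g \<in> H \<Longrightarrow> h \<in> H \<Longrightarrow> g \<otimes> h \<in> H" and H_inv: "g \<in> H \<Longrightarrow> inv g \<in> H"
  using subgroup by (auto intro: subgroup.one_closed subgroup.m_closed subgroup.m_inv_closed)

lemma coord1_vec_l_iff: "g \<in> carrier G \<Longrightarrow> coord1_vec (l g) \<longleftrightarrow> g \<in> H"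
  using length ht_le_1_iff_coord1_vec H_def unfolding length_function_def by auto

lemma l_one: "l \<one> = (\<lambda>i. 0)"
  using length unfolding length_function_def by simp

lemma l_inv: "g \<in> carrier G \<Longrightarrow> l (inv g) = l g"
  using length unfolding length_function_def by simp

lemma l_nonneg: "g \<in> H \<Longrightarrow> 0 \<le> l g 1"
  using length H_carrier lex_le_coord1_vec_iff[of "\<lambda>i. 0" "l g"] coord1_vec_l_iff
  unfolding length_function_def coord1_vec_def by auto

lemma l_mult_le:
  assumes "g \<in> H" "h \<in> H"
  shows "l (g \<otimes> h) 1 \<le> l g 1 + l h 1"
proof -
  have "coord1_vec (l g)" "coord1_vec (l h)" "coord1_vec (l (g \<otimes> h))"
    using coord1_vec_l_iff assms H_carrier H_mult by auto
  then have "coord1_vec (\<lambda>i. l g i + l h i)" "coord1_vec (l (g \<otimes> h))"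
    unfolding coord1_vec_def by auto
  moreover have "lex_le (l (g \<otimes> h)) (\<lambda>i. l g i + l h i)"
    using length assms H_carrier unfolding length_function_def by simp
  ultimately show ?thesis using lex_le_coord1_vec_iff by fastforce
qed

definition ldist :: "'a \<Rightarrow> 'a \<Rightarrow> real" where
  "ldist x y = real_of_int (l (inv x \<otimes> y) 1)"

lemma inv_mult_cancel_left:
  "a \<in> carrier G \<Longrightarrow> x \<in> carrier G \<Longrightarrow> y \<in> carrier G \<Longrightarrow> inv (a \<otimes> x) \<otimes> (a \<otimes> y) = inv x \<otimes> y"
  by (simp add: inv_mult_group m_assoc[symmetric]) (simp add: m_assoc)

lemma ldist_refl: "x \<in> carrier G \<Longrightarrow> ldist x x = 0"
  unfolding ldist_def using l_one by simp

lemma ldist_sym: "x \<in> carrier G \<Longrightarrow> y \<in> carrier G \<Longrightarrow> ldist x y = ldist y x"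
  unfolding ldist_def by (metis inv_mult_group inv_inv inv_closed l_inv m_closed)

lemma ldist_translate:
  "a \<in> carrier G \<Longrightarrow> x \<in> carrier G \<Longrightarrow> y \<in> carrier G \<Longrightarrow> ldist (a \<otimes> x) (a \<otimes> y) = ldist x y"
  unfolding ldist_def by (simp add: inv_mult_cancel_left)

lemma ldist_one: "x \<in> carrier G \<Longrightarrow> ldist \<one> x = l x 1"
  unfolding ldist_def by simp

lemma ldist_nonneg: "x \<in> H \<Longrightarrow> y \<in> H \<Longrightarrow> 0 \<le> ldist x y"
  unfolding ldist_def using l_nonneg H_mult H_inv by simp

lemma ldist_triangle: "x \<in> H \<Longrightarrow> y \<in> H \<Longrightarrow> z \<in> H \<Longrightarrow> ldist x z \<le> ldist x y + ldist y z"
proof -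
  assume H: "x \<in> H" "y \<in> H" "z \<in> H"
  then have "inv x \<otimes> z = (inv x \<otimes> y) \<otimes> (inv y \<otimes> z)" using H_carrier
    by (simp add: m_assoc[symmetric]) (simp add: m_assoc)
  then show ?thesis unfolding ldist_def using l_mult_le H_mult H_inv H by (metis of_int_add of_int_le_iff)
qed

lemma gprod_first: "x \<in> H \<Longrightarrow> y \<in> H \<Longrightarrow> real_of_rat (gprod G l x y 1) = gromov_product ldist \<one> x y"
  unfolding gprod_def gromov_product_def using ldist_one H_carrier
  by (simp add: ldist_def of_rat_divide of_rat_add of_rat_diff)

lemma coord1_vec_gprod:
  assumes "x \<in> H" "y \<in> H"
  shows "coord1_vec (gprod G l x y)"
proof -
  have "coord1_vec (l x)" "coord1_vec (l y)" "coord1_vec (l (inv x \<otimes> y))"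
    using coord1_vec_l_iff assms H_carrier H_mult H_inv by auto
  then show ?thesis unfolding coord1_vec_def gprod_def by simp
qed

lemma ldist_hyperbolic_at_one:
  assumes H: "f \<in> H" "g \<in> H" "h \<in> H"
  shows "min (gromov_product ldist \<one> f h) (gromov_product ldist \<one> g h) - \<delta> 1 \<le> gromov_product ldist \<one> f g"
proof -
  let ?A = "gprod G l f h" and ?B = "gprod G l g h" and ?C = "gprod G l f g"
  let ?v = "\<lambda>i. lex_min ?A ?B i - of_int (\<delta> i)"
  have c: "coord1_vec ?A" "coord1_vec ?B" "coord1_vec ?C" using coord1_vec_gprod H by auto
  have "coord1_vec \<delta>" using ht_le_1_iff_coord1_vec[OF zn_delta] ht_delta by simp
  then have cv: "coord1_vec ?v" using lex_min_coord1_vec(2)[OF c(1,2)] unfolding coord1_vec_def by simp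
  have "lex_le ?v ?C"
    using hyperbolic[unfolded hyperbolic_lf_def, rule_format, of f g h] H_carrier H by simp
  then have "min (?A 1) (?B 1) - of_int (\<delta> 1) \<le> ?C 1"
    using lex_le_coord1_vec_iff[OF cv c(3)] lex_min_coord1_vec(1)[OF c(1,2)] by simp
  then have "real_of_rat (min (?A 1) (?B 1) - of_int (\<delta> 1)) \<le> real_of_rat (?C 1)"
    by (simp only: of_rat_less_eq)
  moreover have "real_of_rat (min a b) = min (real_of_rat a) (real_of_rat b)" for a b
    by (simp add: min_def of_rat_less_eq)
  ultimately show ?thesis using gprod_first H by (simp add: of_rat_diff)
qed

lemma ldist_hyperbolic:
  assumes H: "e \<in> H" "x \<in> H" "y \<in> H" "z \<in> H"
  shows "min (gromov_product ldist e x z) (gromov_product ldist e z y) - \<bar>\<delta> 1\<bar> \<le> gromov_product ldist e x y"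
proof -
  have e: "e \<in> carrier G" "inv e \<in> carrier G" using H H_carrier by auto
  have base: "ldist e u = ldist \<one> (inv e \<otimes> u)" if "u \<in> H" for u
    using ldist_translate[OF e(2), of e u] e H_carrier that by simp
  have shift: "gromov_product ldist e u v = gromov_product ldist \<one> (inv e \<otimes> u) (inv e \<otimes> v)"
    if "u \<in> H" "v \<in> H" for u v
    using base that ldist_translate[OF e(2), of u v] H_carrier unfolding gromov_product_def by simp
  have "inv e \<otimes> u \<in> H" if "u \<in> H" for u using H_mult[OF H_inv[OF H(1)] that] .
  then have "min (gromov_product ldist \<one> (inv e \<otimes> x) (inv e \<otimes> z))
      (gromov_product ldist \<one> (inv e \<otimes> y) (inv e \<otimes> z)) - \<delta> 1
      \<le> gromov_product ldist \<one> (inv e \<otimes> x) (inv e \<otimes> y)"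
    using ldist_hyperbolic_at_one H by simp
  moreover have "gromov_product ldist e z y = gromov_product ldist e y z"
    using gromov_product_commute[of ldist z y e] ldist_sym H H_carrier by simp
  ultimately show ?thesis using shift H by simp
qed


definition word_prod :: "'a list \<Rightarrow> 'a" where
  "word_prod xs = foldr (\<lambda>x y. x \<otimes> y) xs \<one>"

lemma word_prod_Nil [simp]: "word_prod [] = \<one>"
  and word_prod_Cons [simp]: "word_prod (x # xs) = x \<otimes> word_prod xs"
  unfolding word_prod_def by simp_all

lemma word_prod_closed: "set xs \<subseteq> carrier G \<Longrightarrow> word_prod xs \<in> carrier G"
  by (induction xs) auto

lemma word_prod_in_H: "set xs \<subseteq> H \<Longrightarrow> word_prod xs \<in> H"
  by (induction xs) (auto simp: H_one H_mult)

lemma word_prod_append: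
  "set xs \<subseteq> carrier G \<Longrightarrow> set ys \<subseteq> carrier G \<Longrightarrow> word_prod (xs @ ys) = word_prod xs \<otimes> word_prod ys"
  by (induction xs) (auto simp: word_prod_closed m_assoc)

lemma word_prod_rev_inv:
  "set xs \<subseteq> carrier G \<Longrightarrow> word_prod (rev (map (\<lambda>x. inv x) xs)) = inv (word_prod xs)"
proof (induction xs)
  case (Cons x xs)
  have "word_prod (rev (map (\<lambda>x. inv x) (x # xs))) = word_prod (rev (map (\<lambda>x. inv x) xs)) \<otimes> word_prod [inv x]"
    using Cons.prems by (simp only: rev.simps list.map) (intro word_prod_append; auto)
  also have "\<dots> = inv (x \<otimes> word_prod xs)"
    using Cons word_prod_closed by (simp add: inv_mult_group)
  finally show ?case by simp
qed simp

definition letters :: "'a set \<Rightarrow> 'a set" where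
  "letters S = S \<union> (\<lambda>s. inv s) ` S"

lemma letters_subset: "S \<subseteq> H \<Longrightarrow> letters S \<subseteq> H"
  unfolding letters_def using H_inv by auto

lemma inv_letters: "S \<subseteq> H \<Longrightarrow> x \<in> letters S \<Longrightarrow> inv x \<in> letters S"
  unfolding letters_def using H_carrier by auto

lemma generate_word:
  assumes S: "S \<subseteq> H" and g: "g \<in> generate G1 S"
  shows "\<exists>xs. set xs \<subseteq> letters S \<and> word_prod xs = g"
  using g
proof (induction rule: generate.induct)
  case one
  show ?case by (intro exI[of _ "[]"]) simp
next
  case (incl h)
  then show ?case using H_carrier S by (intro exI[of _ "[h]"]) (auto simp: letters_def)
next
  case (inv h)
  have "inv\<^bsub>G1\<^esub> h = inv h" using m_inv_consistent[OF subgroup] inv S by auto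
  then show ?case using inv H_carrier S by (intro exI[of _ "[inv h]"]) (auto simp: letters_def)
next
  case (eng h1 h2)
  then obtain xs ys where "set xs \<subseteq> letters S" "word_prod xs = h1" "set ys \<subseteq> letters S" "word_prod ys = h2"
    by blast
  moreover have "letters S \<subseteq> carrier G" using letters_subset[OF S] H_carrier by auto
  ultimately show ?case by (intro exI[of _ "xs @ ys"]) (auto simp: word_prod_append)
qed

definition wlen :: "'a set \<Rightarrow> 'a \<Rightarrow> nat" where
  "wlen S g = (LEAST k. \<exists>xs. length xs = k \<and> set xs \<subseteq> letters S \<and> word_prod xs = g)"

lemma word_length_eq_wlen: "S \<subseteq> H \<Longrightarrow> word_length G1 S g = wlen S g"
proof -
  assume S: "S \<subseteq> H"
  have "(\<lambda>s. inv\<^bsub>G1\<^esub> s) ` S = (\<lambda>s. inv s) ` S" using m_inv_consistent[OF subgroup] S by (intro image_cong) auto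
  moreover have "foldr (\<lambda>x y. x \<otimes>\<^bsub>G1\<^esub> y) xs \<one>\<^bsub>G1\<^esub> = word_prod xs" for xs
    unfolding word_prod_def by simp
  ultimately show ?thesis unfolding word_length_def wlen_def letters_def by simp
qed

lemma wlen_le: "set xs \<subseteq> letters S \<Longrightarrow> word_prod xs = g \<Longrightarrow> wlen S g \<le> length xs"
  unfolding wlen_def by (rule Least_le) blast

abbreviation generates :: "'a set \<Rightarrow> bool" where
  "generates S \<equiv> finite S \<and> S \<subseteq> H \<and> generate G1 S = H"

lemma shortest_word:
  assumes "generates S" "g \<in> H"
  obtains xs where "length xs = wlen S g" "set xs \<subseteq> letters S" "word_prod xs = g"
proof -
  obtain xs where "set xs \<subseteq> letters S \<and> word_prod xs = g" using generate_word assms by blast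
  then have "\<exists>k xs. length xs = k \<and> set xs \<subseteq> letters S \<and> word_prod xs = g" by blast
  then have "\<exists>xs. length xs = wlen S g \<and> set xs \<subseteq> letters S \<and> word_prod xs = g"
    unfolding wlen_def by (rule LeastI_ex)
  then show thesis using that by blast
qed

lemma wlen_one: "wlen S \<one> = 0"
  using wlen_le[of "[]" S \<one>] by simp

lemma wlen_mult_le:
  assumes S: "generates S" and gh: "g \<in> H" "h \<in> H"
  shows "wlen S (g \<otimes> h) \<le> wlen S g + wlen S h"
proof -
  obtain xs where xs: "length xs = wlen S g" "set xs \<subseteq> letters S" "word_prod xs = g"
    using shortest_word[OF S gh(1)] .
  obtain ys where ys: "length ys = wlen S h" "set ys \<subseteq> letters S" "word_prod ys = h"
    using shortest_word[OF S gh(2)] .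
  have "letters S \<subseteq> carrier G" using letters_subset S H_carrier by blast
  then have "word_prod (xs @ ys) = g \<otimes> h" using xs ys by (simp add: word_prod_append)
  then have "wlen S (g \<otimes> h) \<le> length (xs @ ys)" using xs ys by (intro wlen_le) auto
  then show ?thesis using xs ys by simp
qed

lemma wlen_inv_le:
  assumes S: "generates S" and g: "g \<in> H"
  shows "wlen S (inv g) \<le> wlen S g"
proof -
  obtain xs where xs: "length xs = wlen S g" "set xs \<subseteq> letters S" "word_prod xs = g"
    using shortest_word[OF S g] .
  have "letters S \<subseteq> carrier G" using letters_subset S H_carrier by blast
  then have "word_prod (rev (map (\<lambda>x. inv x) xs)) = inv g" using xs by (simp add: word_prod_rev_inv)
  moreover have "set (rev (map (\<lambda>x. inv x) xs)) \<subseteq> letters S" using xs inv_letters S by auto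
  ultimately have "wlen S (inv g) \<le> length (rev (map (\<lambda>x. inv x) xs))" by (intro wlen_le)
  then show ?thesis using xs by simp
qed

lemma wlen_inv: "generates S \<Longrightarrow> g \<in> H \<Longrightarrow> wlen S (inv g) = wlen S g"
  using wlen_inv_le[of S g] wlen_inv_le[of S "inv g"] H_inv H_carrier by fastforce

definition letter_bound :: "'a set \<Rightarrow> int" where
  "letter_bound S = Max (insert 0 ((\<lambda>s. l s 1) ` S))"

lemma letter_bound_nonneg: "finite S \<Longrightarrow> 0 \<le> letter_bound S"
  unfolding letter_bound_def by simp

lemma l_letter_le:
  assumes "finite S" "S \<subseteq> H" "x \<in> letters S"
  shows "l x 1 \<le> letter_bound S"
proof -
  have "l s 1 \<le> letter_bound S" if "s \<in> S" for s
    unfolding letter_bound_def using assms(1) that by (intro Max_ge) auto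
  then show ?thesis using assms l_inv H_carrier unfolding letters_def by auto
qed

lemma l_word_prod_le:
  assumes "finite S" "S \<subseteq> H" "set xs \<subseteq> letters S"
  shows "l (word_prod xs) 1 \<le> letter_bound S * length xs"
  using assms(3)
proof (induction xs)
  case (Cons x xs)
  have "x \<in> H" "set xs \<subseteq> H" using Cons.prems letters_subset[OF assms(2)] by auto
  then have "l (x \<otimes> word_prod xs) 1 \<le> l x 1 + l (word_prod xs) 1" using l_mult_le word_prod_in_H by blast
  moreover have "l x 1 \<le> letter_bound S" using l_letter_le assms Cons.prems by auto
  ultimately show ?case using Cons by (simp add: algebra_simps)
qed (simp add: l_one)


lemma coarse_geodesic_translate:
  assumes z: "coarse_geodesic H ldist L x y z N" and a: "a \<in> H"
  shows "coarse_geodesic H ldist L (a \<otimes> x) (a \<otimes> y) (\<lambda>t. a \<otimes> z t) N"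
proof -
  note zH = coarse_geodesicD(3)[OF z]
  have dist: "ldist (a \<otimes> z s) (a \<otimes> z t) = ldist (z s) (z t)" if "s \<le> N" "t \<le> N" for s t
    using ldist_translate[of a "z s" "z t"] a zH that H_carrier by simp
  show ?thesis unfolding coarse_geodesic_def
  proof (intro conjI allI impI)
    fix s t u assume stu: "s \<le> t" "t \<le> u" "u \<le> N"
    then show "ldist (a \<otimes> z s) (a \<otimes> z u) = ldist (a \<otimes> z s) (a \<otimes> z t) + ldist (a \<otimes> z t) (a \<otimes> z u)"
      using dist[of s u] dist[of s t] dist[of t u] coarse_geodesicD(4)[OF z stu] by simp
  next
    fix t assume "t < N"
    then show "ldist (a \<otimes> z t) (a \<otimes> z (Suc t)) \<le> L"
      using dist[of t "Suc t"] coarse_geodesicD(5)[OF z] by simp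
  qed (use coarse_geodesicD(1,2)[OF z] H_mult[OF a] zH in auto)
qed

lemma gromov_product_mult_right_le:
  assumes H: "g \<in> H" "h \<in> H" "x \<in> H"
  shows "gromov_product ldist \<one> g (h \<otimes> x) \<le> gromov_product ldist \<one> g h + l x 1"
proof -
  have hx: "h \<otimes> x \<in> H" using H_mult H by simp
  have step: "ldist h (h \<otimes> x) = l x 1" "ldist (h \<otimes> x) h = l x 1"
    using ldist_translate[of h \<one> x] ldist_one ldist_sym[of h "h \<otimes> x"] H_carrier H hx by auto
  have "ldist \<one> (h \<otimes> x) \<le> ldist \<one> h + ldist h (h \<otimes> x)" using ldist_triangle H_one H hx by blast
  moreover have "ldist g h \<le> ldist g (h \<otimes> x) + ldist (h \<otimes> x) h" using ldist_triangle H hx by blast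
  ultimately show ?thesis using step unfolding gromov_product_altdef by linarith
qed

text \<open>Along a word for \<open>g\<close> the Gromov product with \<open>g\<close> at \<open>\<one>\<close> grows from \<open>0\<close> to
  \<open>l(g)\<close> in steps of at most the length of a letter.\<close>

lemma small_positive_gromov_product:
  assumes S: "generates S" and g: "g \<in> H" and long: "letter_bound S < l g 1"
  obtains h where "h \<in> H" "0 < gromov_product ldist \<one> g h" "gromov_product ldist \<one> g h \<le> letter_bound S"
proof -
  have letters: "letters S \<subseteq> H" using letters_subset S by blast
  have "\<exists>h\<in>H. 0 < gromov_product ldist \<one> g h \<and> gromov_product ldist \<one> g h \<le> letter_bound S"
    if "set ys \<subseteq> letters S" "0 < gromov_product ldist \<one> g (word_prod ys)" for ys
    using that
  proof (induction ys rule: rev_induct)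
    case Nil
    then show ?case
      using ldist_refl ldist_sym[of \<one> g] g H_carrier unfolding gromov_product_def by simp
  next
    case (snoc x ys)
    have x: "x \<in> H" and ys: "set ys \<subseteq> H" using snoc.prems letters by auto
    have prod: "word_prod (ys @ [x]) = word_prod ys \<otimes> x"
      using word_prod_append[of ys "[x]"] ys x H_carrier by auto
    show ?case
    proof (cases "0 < gromov_product ldist \<one> g (word_prod ys)")
      case True
      then show ?thesis using snoc by auto
    next
      case False
      have "gromov_product ldist \<one> g (word_prod ys \<otimes> x) \<le> gromov_product ldist \<one> g (word_prod ys) + l x 1"
        using gromov_product_mult_right_le g word_prod_in_H[OF ys] x by blast
      moreover have "l x 1 \<le> letter_bound S" using l_letter_le S snoc.prems by auto
      ultimately show ?thesis
        using False snoc.prems(2) prod H_mult[OF word_prod_in_H[OF ys] x] by (intro bexI) auto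
    qed
  qed
  moreover obtain xs where "set xs \<subseteq> letters S" "word_prod xs = g"
    using generate_word S g by blast
  moreover have "gromov_product ldist \<one> g g = l g 1"
    using gromov_product_self[of ldist g \<one>] ldist_refl ldist_one g H_carrier by simp
  moreover have "0 \<le> letter_bound S" using letter_bound_nonneg S by simp
  ultimately show thesis using that long by force
qed

lemma regular_split:
  assumes g: "g \<in> H" and h: "h \<in> H"
  obtains a b where "a \<in> H" "b \<in> H" "g = a \<otimes> b" "l g 1 = l a 1 + l b 1"
    "real_of_int (l a 1) = gromov_product ldist \<one> g h"
proof -
  obtain a b where ab: "a \<in> carrier G" "b \<in> carrier G" "(\<lambda>i. of_int (l a i)) = gprod G l g h" "g = a \<otimes> b"
    "l g = (\<lambda>i. l a i + l b i)"
    using regular g h H_carrier unfolding regular_lf_def by blast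
  have "coord1_vec (l a)"
    using coord1_vec_gprod[OF g h] fun_cong[OF ab(3)] unfolding coord1_vec_def by (metis of_int_eq_0_iff)
  then have a: "a \<in> H" using coord1_vec_l_iff ab(1) by blast
  then have "b = inv a \<otimes> g" using ab(1,2,4) by (simp add: m_assoc[symmetric])
  then have b: "b \<in> H" using H_mult H_inv a g by simp
  have "real_of_int (l a 1) = real_of_rat (gprod G l g h 1)"
    using fun_cong[OF ab(3), of 1] by (metis of_rat_of_int_eq)
  then show thesis using that a b ab(4,5) gprod_first g h by simp
qed

lemma split_off_short_prefix:
  assumes S: "generates S" and g: "g \<in> H" and long: "letter_bound S < l g 1"
  obtains a b where "a \<in> H" "b \<in> H" "g = a \<otimes> b" "l g 1 = l a 1 + l b 1"
    "0 < l a 1" "l a 1 \<le> letter_bound S"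
proof -
  obtain h where h: "h \<in> H" "0 < gromov_product ldist \<one> g h" "gromov_product ldist \<one> g h \<le> letter_bound S"
    using small_positive_gromov_product[OF S g long] .
  obtain a b where "a \<in> H" "b \<in> H" "g = a \<otimes> b" "l g 1 = l a 1 + l b 1"
    "real_of_int (l a 1) = gromov_product ldist \<one> g h"
    using regular_split[OF g h(1)] .
  then show thesis using that h by simp
qed

lemma coarse_geodesic_from_one:
  assumes S: "generates S" and g: "g \<in> H"
  shows "\<exists>z N. coarse_geodesic H ldist (letter_bound S) \<one> g z N"
  using g
proof (induction "nat (l g 1)" arbitrary: g rule: less_induct)
  case less
  have prepend_one: "\<exists>z N. coarse_geodesic H ldist (letter_bound S) \<one> g z N"
    if a: "a \<in> H" and z: "coarse_geodesic H ldist (letter_bound S) a g z N"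
      and aligned: "l g 1 = l a 1 + ldist a g" and short: "l a 1 \<le> letter_bound S" for a z N
    using coarse_geodesic_Cons[OF z H_one ldist_refl[OF one_closed] ldist_triangle]
      aligned short ldist_one a less.prems H_carrier by auto
  show ?case
  proof (cases "l g 1 \<le> letter_bound S")
    case True
    have "coarse_geodesic H ldist (letter_bound S) g g (\<lambda>_. g) 0"
      unfolding coarse_geodesic_def using ldist_refl less.prems H_carrier by auto
    then show ?thesis using prepend_one[of g] True less.prems ldist_refl H_carrier by simp
  next
    case False
    then obtain a b where ab: "a \<in> H" "b \<in> H" "g = a \<otimes> b" "l g 1 = l a 1 + l b 1"
      "0 < l a 1" "l a 1 \<le> letter_bound S"
      using split_off_short_prefix[OF S less.prems] by auto
    then have "nat (l b 1) < nat (l g 1)" using l_nonneg[of b] by simp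
    then obtain z N where "coarse_geodesic H ldist (letter_bound S) \<one> b z N"
      using less.hyps ab(2) by blast
    then have "coarse_geodesic H ldist (letter_bound S) a g (\<lambda>t. a \<otimes> z t) N"
      using coarse_geodesic_translate[of _ \<one> b z N a] ab H_carrier by simp
    moreover have "ldist a g = l b 1"
      using ldist_translate[of a \<one> b] ldist_one ab H_carrier by simp
    ultimately show ?thesis using prepend_one ab by simp
  qed
qed

lemma ldist_coarse_geodesic:
  assumes S: "generates S" and xy: "x \<in> H" "y \<in> H"
  shows "\<exists>z N. coarse_geodesic H ldist (letter_bound S) x y z N"
proof -
  obtain z N where "coarse_geodesic H ldist (letter_bound S) \<one> (inv x \<otimes> y) z N"
    using coarse_geodesic_from_one[OF S] H_mult[OF H_inv] xy by blast
  from coarse_geodesic_translate[OF this xy(1)] show ?thesis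
    using xy H_carrier by (auto simp: m_assoc[symmetric])
qed


definition wdist :: "'a set \<Rightarrow> 'a \<Rightarrow> 'a \<Rightarrow> real" where
  "wdist S x y = real (wlen S (inv x \<otimes> y))"

lemma word_dist_eq_wdist: "S \<subseteq> H \<Longrightarrow> x \<in> H \<Longrightarrow> y \<in> H \<Longrightarrow> word_dist G1 S x y = wdist S x y"
  unfolding word_dist_def wdist_def using word_length_eq_wlen m_inv_consistent[OF subgroup] by simp

lemma wdist_refl: "x \<in> H \<Longrightarrow> wdist S x x = 0"
  unfolding wdist_def using wlen_one H_carrier by simp

lemma wdist_sym: "generates S \<Longrightarrow> x \<in> H \<Longrightarrow> y \<in> H \<Longrightarrow> wdist S x y = wdist S y x"
  unfolding wdist_def using wlen_inv[of S "inv x \<otimes> y"] H_mult H_inv H_carrier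
  by (simp add: inv_mult_group)

lemma wdist_triangle:
  assumes S: "generates S" and H: "x \<in> H" "y \<in> H" "z \<in> H"
  shows "wdist S x z \<le> wdist S x y + wdist S y z"
proof -
  have "inv x \<otimes> z = (inv x \<otimes> y) \<otimes> (inv y \<otimes> z)" using H H_carrier
    by (simp add: m_assoc[symmetric]) (simp add: m_assoc)
  then show ?thesis
    unfolding wdist_def using wlen_mult_le[OF S, of "inv x \<otimes> y" "inv y \<otimes> z"] H_mult H_inv H by simp
qed

lemma ldist_le_wdist:
  assumes S: "generates S" and H: "x \<in> H" "y \<in> H"
  shows "ldist x y \<le> letter_bound S * wdist S x y"
proof -
  have "inv x \<otimes> y \<in> H" using H_mult[OF H_inv] H by blast
  then obtain xs where xs: "length xs = wlen S (inv x \<otimes> y)" "set xs \<subseteq> letters S" "word_prod xs = inv x \<otimes> y"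
    using shortest_word[OF S] by blast
  then have "l (inv x \<otimes> y) 1 \<le> letter_bound S * wlen S (inv x \<otimes> y)"
    using l_word_prod_le[of S xs] S by simp
  then show ?thesis unfolding ldist_def wdist_def by (metis of_int_le_iff of_int_mult of_int_of_nat_eq)
qed

lemma wlen_infix:
  assumes S: "generates S" and xs: "set xs \<subseteq> letters S" "length xs = wlen S (word_prod xs)"
    and ij: "i \<le> j" "j \<le> length xs"
  shows "wlen S (word_prod (drop i (take j xs))) = j - i"
proof -
  let ?u = "take i xs" and ?v = "drop i (take j xs)" and ?w = "drop j xs"
  have split: "xs = ?u @ ?v @ ?w" using ij by (metis append_assoc append_take_drop_id min.absorb1 take_take)
  have sets: "set ?u \<subseteq> letters S" "set ?v \<subseteq> letters S" "set ?w \<subseteq> letters S"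
    using xs by (auto dest: in_set_takeD in_set_dropD)
  have H: "set ?u \<subseteq> H" "set ?v \<subseteq> H" "set ?w \<subseteq> H" using sets letters_subset S by blast+
  then have C: "set ?u \<subseteq> carrier G" "set (?v @ ?w) \<subseteq> carrier G" using H_carrier by auto
  have "word_prod xs = word_prod ?u \<otimes> word_prod (?v @ ?w)"
    using word_prod_append[OF C] split by simp
  also have "word_prod (?v @ ?w) = word_prod ?v \<otimes> word_prod ?w"
    using word_prod_append C by simp
  finally have "wlen S (word_prod xs) \<le> wlen S (word_prod ?u) + wlen S (word_prod ?v \<otimes> word_prod ?w)"
    using wlen_mult_le[OF S] word_prod_in_H H H_mult by simp
  also have "\<dots> \<le> wlen S (word_prod ?u) + (wlen S (word_prod ?v) + wlen S (word_prod ?w))"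
    using wlen_mult_le[OF S] word_prod_in_H H by simp
  finally have "length xs \<le> wlen S (word_prod ?u) + (wlen S (word_prod ?v) + wlen S (word_prod ?w))"
    using xs(2) by simp
  moreover have "wlen S (word_prod ?u) \<le> i" "wlen S (word_prod ?v) \<le> j - i" "wlen S (word_prod ?w) \<le> length xs - j"
    using wlen_le[OF sets(1)] wlen_le[OF sets(2)] wlen_le[OF sets(3)] ij by auto
  ultimately show ?thesis using ij by linarith
qed

lemma wdist_discrete_geodesic:
  assumes S: "generates S" and H: "x \<in> H" "y \<in> H"
  shows "\<exists>p m. discrete_geodesic H (wdist S) x y p m"
proof -
  have "inv x \<otimes> y \<in> H" using H_mult[OF H_inv] H by blast
  then obtain xs where xs: "length xs = wlen S (inv x \<otimes> y)" "set xs \<subseteq> letters S" "word_prod xs = inv x \<otimes> y"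
    using shortest_word[OF S] by blast
  define p where "p i = x \<otimes> word_prod (take i xs)" for i
  have "set xs \<subseteq> H" using xs(2) letters_subset S by blast
  then have xsH: "set (take i xs) \<subseteq> H" "set (drop i (take j xs)) \<subseteq> H" for i j
    by (auto dest: in_set_takeD in_set_dropD)
  have pH: "p i \<in> H" for i unfolding p_def using H_mult H word_prod_in_H xsH by simp
  have up: "wdist S (p i) (p j) = real j - real i" if ij: "i \<le> j" "j \<le> length xs" for i j
  proof -
    have G: "set (take i xs) \<subseteq> carrier G" "set (drop i (take j xs)) \<subseteq> carrier G"
      using xsH H_carrier by blast+
    have "take j xs = take i xs @ drop i (take j xs)" using ij by (metis append_take_drop_id min.absorb1 take_take)
    then have "word_prod (take j xs) = word_prod (take i xs) \<otimes> word_prod (drop i (take j xs))"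
      using word_prod_append[OF G] by simp
    then have "inv (p i) \<otimes> p j = word_prod (drop i (take j xs))"
      unfolding p_def using inv_mult_cancel_left word_prod_closed[OF G(1)] word_prod_closed[OF G(2)] H H_carrier
      by (simp add: m_assoc[symmetric])
    then show ?thesis unfolding wdist_def using wlen_infix[OF S xs(2) _ ij] xs ij by simp
  qed
  have "discrete_geodesic H (wdist S) x y p (length xs)" unfolding discrete_geodesic_def
  proof (intro conjI allI impI)
    show "p 0 = x" unfolding p_def using H H_carrier by simp
    show "p (length xs) = y" unfolding p_def using xs H H_carrier by (simp add: m_assoc[symmetric])
    fix i j assume "i \<le> length xs" "j \<le> length xs"
    then show "wdist S (p i) (p j) = \<bar>real i - real j\<bar>"
      using up[of i j] up[of j i] wdist_sym[OF S pH pH] by (cases "i \<le> j") auto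
  qed (use pH in auto)
  then show ?thesis by blast
qed

lemma finite_short_elements: "finite {g \<in> H. l g 1 \<le> r}"
proof -
  have "{g \<in> H. l g 1 \<le> r} \<subseteq> {g \<in> carrier G. lex_le (l g) (\<lambda>i. if i = 1 then int (nat r) else 0)}"
  proof safe
    fix g assume g: "g \<in> H" "l g 1 \<le> r"
    have r: "coord1_vec (\<lambda>i::nat. if i = 1 then int (nat r) else 0)" unfolding coord1_vec_def by simp
    have "coord1_vec (l g)" using coord1_vec_l_iff g H_carrier by blast
    then show "lex_le (l g) (\<lambda>i. if i = 1 then int (nat r) else 0)"
      using lex_le_coord1_vec_iff[OF _ r] g l_nonneg[OF g(1)] by simp
  qed (use H_carrier in auto)
  moreover have "finite {g \<in> carrier G. lex_le (l g) (\<lambda>i. if i = 1 then int (nat r) else 0)}"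
    using proper unfolding proper_lf_def by blast
  ultimately show ?thesis by (rule finite_subset)
qed

text \<open>Induction on \<open>l(g)\<close>: elements of small length have bounded word length, and longer
  ones split off a prefix of small length.\<close>

lemma wlen_le_linear:
  assumes S: "generates S"
  obtains K where "\<And>g. g \<in> H \<Longrightarrow> int (wlen S g) \<le> int K * max 1 (l g 1)"
proof -
  define K where "K = Max (wlen S ` {g \<in> H. l g 1 \<le> letter_bound S})"
  have K: "wlen S g \<le> K" if "g \<in> H" "l g 1 \<le> letter_bound S" for g
    unfolding K_def using finite_short_elements that by simp
  have "int (wlen S g) \<le> int K * max 1 (l g 1)" if "g \<in> H" for g
    using that
  proof (induction "nat (l g 1)" arbitrary: g rule: less_induct)
    case less
    show ?case
    proof (cases "l g 1 \<le> letter_bound S")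
      case True
      have "int K \<le> int K * max 1 (l g 1)" by (simp add: mult_le_cancel_left1)
      then show ?thesis using K[OF less.prems True] by linarith
    next
      case False
      then obtain a b where ab: "a \<in> H" "b \<in> H" "g = a \<otimes> b" "l g 1 = l a 1 + l b 1"
        "0 < l a 1" "l a 1 \<le> letter_bound S"
        using split_off_short_prefix[OF S less.prems] by auto
      have "nat (l b 1) < nat (l g 1)" using ab l_nonneg[of b] by simp
      then have IH: "int (wlen S b) \<le> int K * max 1 (l b 1)" using less.hyps ab(2) by blast
      have "wlen S g \<le> K + wlen S b" using wlen_mult_le[OF S ab(1,2)] K[OF ab(1,6)] ab(3) by simp
      moreover have "int K * max 1 (l b 1) \<le> int K * (l g 1 - 1)"
        using False ab letter_bound_nonneg S by (intro mult_left_mono) auto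
      moreover have "max 1 (l g 1) = l g 1" using False letter_bound_nonneg[of S] S by simp
      ultimately show ?thesis using IH by (simp add: algebra_simps)
    qed
  qed
  then show thesis by (rule that)
qed

lemma wdist_le_ldist:
  assumes S: "generates S"
  obtains M where "M \<ge> 0" "\<And>x y. x \<in> H \<Longrightarrow> y \<in> H \<Longrightarrow> wdist S x y \<le> M * ldist x y + M"
proof -
  obtain K where K: "\<And>g. g \<in> H \<Longrightarrow> int (wlen S g) \<le> int K * max 1 (l g 1)"
    using wlen_le_linear[OF S] by blast
  have "wdist S x y \<le> K * ldist x y + K" if "x \<in> H" "y \<in> H" for x y
  proof -
    have g: "inv x \<otimes> y \<in> H" using H_mult H_inv that by simp
    have "int (wlen S (inv x \<otimes> y)) \<le> int K * (l (inv x \<otimes> y) 1 + 1)"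
      using K[OF g] l_nonneg[OF g] by (smt (verit) mult_left_mono of_nat_0_le_iff)
    then have "real_of_int (int (wlen S (inv x \<otimes> y))) \<le> real_of_int (int K * (l (inv x \<otimes> y) 1 + 1))"
      by (simp only: of_int_le_iff)
    then show ?thesis unfolding wdist_def ldist_def by (simp add: algebra_simps)
  qed
  then show thesis using that[of "real K"] by simp
qed

theorem gromov_hyperbolic_wdist:
  assumes S: "generates S"
  shows "gromov_hyperbolic H (wdist S)"
proof -
  obtain M where M: "M \<ge> 0" "\<And>x y. x \<in> H \<Longrightarrow> y \<in> H \<Longrightarrow> wdist S x y \<le> M * ldist x y + M"
    using wdist_le_ldist[OF S] by blast
  interpret hyperbolic_transfer H "wdist S" ldist "\<bar>\<delta> 1\<bar>" "letter_bound S" M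
  proof
    show "0 \<le> real_of_int (letter_bound S)" using letter_bound_nonneg S by simp
  qed (use wdist_refl wdist_sym[OF S] wdist_triangle[OF S] wdist_discrete_geodesic[OF S]
      ldist_refl ldist_sym ldist_triangle ldist_hyperbolic ldist_coarse_geodesic[OF S]
      ldist_le_wdist[OF S] M H_carrier in auto)
  show ?thesis by (rule gromov_hyperbolic_w)
qed

theorem quasi_isometric_wdist:
  assumes S: "generates S"
  shows "quasi_isometric H (wdist S) H ldist"
proof -
  obtain M where M: "M \<ge> 0" "\<And>x y. x \<in> H \<Longrightarrow> y \<in> H \<Longrightarrow> wdist S x y \<le> M * ldist x y + M"
    using wdist_le_ldist[OF S] by blast
  define K where "K = max 1 (max (real_of_int (letter_bound S)) M)"
  have K: "K \<ge> 1" unfolding K_def by simp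
  have "wdist S x y / K - 1 \<le> ldist x y \<and> ldist x y \<le> K * wdist S x y + 1"
    if xy: "x \<in> H" "y \<in> H" for x y
  proof
    have "ldist x y \<le> letter_bound S * wdist S x y" using ldist_le_wdist[OF S xy] .
    also have "\<dots> \<le> K * wdist S x y" unfolding K_def wdist_def by (intro mult_right_mono) auto
    finally show "ldist x y \<le> K * wdist S x y + 1" by simp
    have "wdist S x y \<le> M * ldist x y + M" using M xy by blast
    also have "\<dots> \<le> K * (ldist x y + 1)"
      unfolding K_def using ldist_nonneg[OF xy] by (simp add: distrib_left add_mono mult_right_mono)
    finally show "wdist S x y / K - 1 \<le> ldist x y" using K by (simp add: field_simps)
  qed
  moreover have "\<exists>x\<in>H. ldist y (id x) \<le> 1" if "y \<in> H" for y
    using ldist_refl H_carrier that by force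
  ultimately show ?thesis unfolding quasi_isometric_def using K
    by (intro exI[of _ id] exI[of _ K] exI[of _ 1]) auto
qed

end

theorem lemma3p10:
  fixes G :: "('a, 'c) monoid_scheme" and n :: nat
    and l :: "'a \<Rightarrow> nat \<Rightarrow> int" and \<delta> :: "nat \<Rightarrow> int"
  assumes "group G" and "finitely_generated G" and "torsion_free G"
    and "zn_vec n \<delta>"
    and "length_function G n l" and "proper_lf G l"
    and "regular_lf G l \<delta>" and "hyperbolic_lf G l \<delta>"
    and "ht \<delta> = 1"
    and "isolated_subgroup {g \<in> carrier G. ht (l g) \<le> 1} G"
    and "finitely_generated (G\<lparr>carrier := {g \<in> carrier G. ht (l g) \<le> 1}\<rparr>)"
  shows "torsion_free (G\<lparr>carrier := {g \<in> carrier G. ht (l g) \<le> 1}\<rparr>)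
    \<and> word_hyperbolic (G\<lparr>carrier := {g \<in> carrier G. ht (l g) \<le> 1}\<rparr>)
    \<and> (\<forall>S. finite S \<and> S \<subseteq> {g \<in> carrier G. ht (l g) \<le> 1}
           \<and> generate (G\<lparr>carrier := {g \<in> carrier G. ht (l g) \<le> 1}\<rparr>) S
               = {g \<in> carrier G. ht (l g) \<le> 1}
         \<longrightarrow> quasi_isometric {g \<in> carrier G. ht (l g) \<le> 1}
               (word_dist (G\<lparr>carrier := {g \<in> carrier G. ht (l g) \<le> 1}\<rparr>) S)
               {g \<in> carrier G. ht (l g) \<le> 1}
               (\<lambda>g h. real_of_int (l (inv\<^bsub>G\<^esub> g \<otimes>\<^bsub>G\<^esub> h) 1)))"
proof -
  define H where "H = {g \<in> carrier G. ht (l g) \<le> 1}"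
  have subgroup: "subgroup H G" using assms(10) unfolding isolated_subgroup_def H_def by simp
  interpret height_one_subgroup G n l \<delta> H
    by (rule height_one_subgroup.intro) (use assms subgroup H_def in auto)
  obtain S0 where S0: "generates S0" using assms(11) unfolding finitely_generated_def H_def by auto
  have "torsion_free G1" using torsion_free_subgroup assms(3) subgroup by blast
  moreover have "word_hyperbolic G1"
    unfolding word_hyperbolic_def
    using subgroup.subgroup_is_group[OF subgroup assms(1)] S0 word_dist_eq_wdist
      gromov_hyperbolic_cong[OF gromov_hyperbolic_wdist[OF S0]] by auto
  moreover have "quasi_isometric H (word_dist G1 S) H ldist" if "generates S" for S
    using quasi_isometric_cong[OF quasi_isometric_wdist[OF that]] word_dist_eq_wdist that by blast
  moreover have "ldist = (\<lambda>g h. real_of_int (l (inv\<^bsub>G\<^esub> g \<otimes>\<^bsub>G\<^esub> h) 1))"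
    by (simp add: ldist_def fun_eq_iff)
  ultimately show ?thesis unfolding H_def[symmetric] by auto
qed

end
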